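(* Let $\mathbb{X},\mathbb{Y}$ be finite-dimensional real polyhedral Banach spaces with $\dim\mathbb{X}=m$, $\dim\mathbb{Y}=n$, and let $T\in\mathbb{L}(\mathbb{X},\mathbb{Y})$ with $\|T\|=1$. Then $T$ is an extreme contraction if and only if $i_{M_T}(T)=mn$.
   Context: A finite-dimensional Banach space is polyhedral if its closed unit ball has finitely many extreme points. $T$ is an extreme contraction if it is an extreme point of the closed unit ball of $\mathbb{L}(\mathbb{X},\mathbb{Y})$. $S_{\mathbb{X}}$, $B_{\mathbb{X}}$: unit sphere and unit ball; $\operatorname{Ext}(C)$: extreme points; $M_T=\{x\in S_{\mathbb{X}}:\|Tx\|=\|T\|\}$; $J(z)=\{f\in\mathbb{Z}^*:\|f\|=1,f(z)=1\}$ for a unit vector $z$. Index of smoothness: let $T\in\mathbb{L}(\mathbb{X},\mathbb{Y})$, $\|T\|=1$, $R\subset S_{\mathbb{X}}$ with $R\cap\operatorname{Ext}(B_{\mathbb{X}})\neq\emptyset$ and $\operatorname{span}R$ finite-dimensional, and suppose $\mathbb{W}:=\operatorname{span}\{y^*\in J(Tv): v\in R\cap\operatorname{Ext}(B_{\mathbb{X}})\}\subset\mathbb{Y}^*$ is finite-dimensional. Fix a basis $v_1,\dots,v_n$ of $\operatorname{span}R$ and a basis $y_1^*,\dots,y_p^*$ of $\mathbb{W}$. For $\alpha\in\mathbb{K}^n,\beta\in\mathbb{K}^p$ let $((\alpha_i\beta_j))\in\mathbb{K}^{np}$ denote the tuple $(\alpha_1\beta_1,\dots,\alpha_1\beta_p,\alpha_2\beta_1,\dots,\alpha_2\beta_p,\dots,\alpha_n\beta_1,\dots,\alpha_n\beta_p)$.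 Then $i_R(T):=\dim Z$, where $Z=\operatorname{span}\{((\alpha_i\beta_j)):\ \sum_{i=1}^n\alpha_iv_i\in R\cap\operatorname{Ext}(B_{\mathbb{X}}),\ \sum_{j=1}^p\beta_jy_j^*\in\operatorname{Ext}(J(\sum_{i=1}^n\alpha_iTv_i))\}\subset\mathbb{K}^{np}$; this number is independent of the chosen bases. *)

theory Defs
  imports "HOL-Analysis.Analysis" "HOL-Library.Function_Algebras"
begin

definition fin_dim_space :: "'a::real_vector itself \<Rightarrow> bool" where
  "fin_dim_space _ \<longleftrightarrow> (\<exists>B::'a set. finite B \<and> span B = UNIV)"

definition ext_ball :: "'a::real_normed_vector set" where
  "ext_ball = {x. x extreme_point_of cball 0 1}"

definition polyhedral :: "'a::real_normed_vector itself \<Rightarrow> bool" where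
  "polyhedral _ \<longleftrightarrow> finite (ext_ball :: 'a set)"

definition supp_fun :: "'b::real_normed_vector \<Rightarrow> ('b \<Rightarrow>\<^sub>L real) set" where
  "supp_fun z = {f. norm f = 1 \<and> blinfun_apply f z = 1}"

definition norm_attain :: "('a::real_normed_vector \<Rightarrow>\<^sub>L 'b::real_normed_vector) \<Rightarrow> 'a set" where
  "norm_attain T = {x. norm x = 1 \<and> norm (blinfun_apply T x) = norm T}"

definition extreme_contraction :: "('a::real_normed_vector \<Rightarrow>\<^sub>L 'b::real_normed_vector) \<Rightarrow> bool" where
  "extreme_contraction T \<longleftrightarrow> T extreme_point_of cball 0 1"

definition W_space :: "'a::real_normed_vector set \<Rightarrow> ('a \<Rightarrow>\<^sub>L 'b::real_normed_vector) \<Rightarrow> ('b \<Rightarrow>\<^sub>L real) set" where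
  "W_space R T = span (\<Union>v \<in> R \<inter> ext_ball. supp_fun (blinfun_apply T v))"

definition is_basis_list :: "'a::real_vector list \<Rightarrow> 'a set \<Rightarrow> bool" where
  "is_basis_list vs V \<longleftrightarrow> distinct vs \<and> independent (set vs) \<and> span (set vs) = V"

(* the tuple ((alpha_i beta_j)) in K^{np}, represented as a function on index pairs
   (i,j) with i < n, j < p, and 0 outside *)
definition tensor_tuple :: "nat \<Rightarrow> nat \<Rightarrow> (nat \<Rightarrow> real) \<Rightarrow> (nat \<Rightarrow> real) \<Rightarrow> (nat \<times> nat \<Rightarrow> real)" where
  "tensor_tuple n p \<alpha> \<beta> = (\<lambda>(i,j). if i < n \<and> j < p then \<alpha> i * \<beta> j else 0)"

definition scale_tuple :: "real \<Rightarrow> (nat \<times> nat \<Rightarrow> real) \<Rightarrow> (nat \<times> nat \<Rightarrow> real)" where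
  "scale_tuple c f = (\<lambda>x. c * f x)"

definition Z_space ::
  "'a::real_normed_vector list \<Rightarrow> ('b::real_normed_vector \<Rightarrow>\<^sub>L real) list \<Rightarrow> 'a set \<Rightarrow> ('a \<Rightarrow>\<^sub>L 'b) \<Rightarrow> (nat \<times> nat \<Rightarrow> real) set" where
  "Z_space vs ys R T = module.span scale_tuple
     {tensor_tuple (length vs) (length ys) \<alpha> \<beta> | \<alpha> \<beta>.
        (\<Sum>i<length vs. \<alpha> i *\<^sub>R vs ! i) \<in> R \<inter> ext_ball \<and>
        (\<Sum>j<length ys. \<beta> j *\<^sub>R ys ! j) \<in>
           {f. f extreme_point_of supp_fun (blinfun_apply T (\<Sum>i<length vs. \<alpha> i *\<^sub>R vs ! i))}}"

definition smooth_index :: "'a::real_normed_vector set \<Rightarrow> ('a \<Rightarrow>\<^sub>L 'b::real_normed_vector) \<Rightarrow> nat" where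
  "smooth_index R T =
     (let vs = (SOME vs. is_basis_list vs (span R));
          ys = (SOME ys. is_basis_list ys (W_space R T))
      in vector_space.dim scale_tuple (Z_space vs ys R T))"

end

theory Submission
  imports Defs
begin

text \<open>
  \<open>T\<close> fails to be extreme exactly when \<open>T \<plusminus> S\<close> stay in the unit ball for some \<open>S \<noteq> 0\<close>.
  Because both unit balls have finitely many extreme points, this happens if and only if some
  \<open>S \<noteq> 0\<close> satisfies \<open>y\<^sup>*(S x) = 0\<close> for every extreme point \<open>x \<in> M\<^sub>T\<close> of \<open>B\<^sub>X\<close> and every extreme
  point \<open>y\<^sup>*\<close> of \<open>J(T x)\<close>: an operator norm is controlled at the finitely many extreme points
  of \<open>B\<^sub>X\<close>, and near a unit vector \<open>T x\<close> the finitely many extreme functionals that do not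
  norm \<open>T x\<close> stay uniformly below 1, leaving room for a small step.

  Writing \<open>x = \<Sum> \<alpha>\<^sub>i v\<^sub>i\<close> and \<open>y\<^sup>* = \<Sum> \<beta>\<^sub>j y\<^sub>j\<^sup>*\<close>, the number \<open>y\<^sup>*(S x)\<close> is the pairing of the tuple
  \<open>(\<alpha>\<^sub>i \<beta>\<^sub>j)\<close> with the matrix \<open>(y\<^sub>j\<^sup>*(S v\<^sub>i))\<close>. Such matrices realise every coefficient array once the
  \<open>v\<^sub>i\<close> and \<open>y\<^sub>j\<^sup>*\<close> are bases of \<open>X\<close> and \<open>Y\<^sup>*\<close>, while if they are not, a rank-one \<open>S \<noteq> 0\<close> annihilates
  all pairs. Hence \<open>S = 0\<close> is forced exactly when the tuples span a space of dimension \<open>mn\<close>.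
\<close>

section \<open>Finite-dimensional normed spaces\<close>

lemma compact_PiE_UNIV:
  fixes S :: "'i \<Rightarrow> real set"
  assumes "\<And>i. compact (S i)"
  shows "compact (PiE UNIV S)"
proof -
  have "compactin (product_topology (\<lambda>i. euclidean) UNIV) (PiE UNIV S)"
    using assms by (simp add: compactin_PiE compactin_euclidean_iff)
  then show ?thesis
    by (simp add: euclidean_product_topology compactin_euclidean_iff)
qed

locale finite_basis =
  fixes B :: "'a::real_normed_vector set"
  assumes finite_B: "finite B" and independent_B: "independent B" and span_B: "span B = UNIV"

lemma finite_basis_exists:
  assumes "fin_dim_space TYPE('a::real_normed_vector)"
  obtains B :: "'a::real_normed_vector set" where "finite_basis B"
proof -
  obtain B0 :: "'a set" where B0: "finite B0" "span B0 = UNIV"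
    using assms unfolding fin_dim_space_def by blast
  obtain B :: "'a set" where B: "independent B" "UNIV \<subseteq> span B"
    using real_vector.basis_exists[of UNIV] by blast
  have "finite B"
    using real_vector.independent_span_bound[OF B0(1) B(1)] B0(2) by auto
  with B show ?thesis
    using that[of B] by (auto simp: finite_basis_def)
qed

context finite_basis
begin

abbreviation coord :: "'a \<Rightarrow> 'a \<Rightarrow> real" where
  "coord x \<equiv> representation B x"

lemma coord_add [simp]: "coord (x + y) b = coord x b + coord y b"
  using real_vector.representation_add[OF independent_B, of y x] span_B by simp

lemma coord_scale [simp]: "coord (c *\<^sub>R x) b = c * coord x b"
  using real_vector.representation_scale[OF independent_B, of x c] span_B by simp

lemma coord_diff [simp]: "coord (x - y) b = coord x b - coord y b"
  using real_vector.representation_diff[OF independent_B, of y x] span_B by simp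

lemma coord_outside: "b \<notin> B \<Longrightarrow> coord x b = 0"
  using real_vector.representation_ne_zero by blast

lemma sum_coord: "(\<Sum>b\<in>B. coord x b *\<^sub>R b) = x"
  using real_vector.sum_representation_eq[of B x B] finite_B independent_B span_B by auto

lemma coord_eq_0_imp_eq_0:
  assumes "\<And>b. b \<in> B \<Longrightarrow> coord x b = 0"
  shows "x = 0"
  using sum_coord[of x] assms by simp

text \<open>The infimum \<open>\<mu>\<close> of \<open>\<parallel>\<Sum>b. c b *\<^sub>R b\<parallel>\<close> over coefficient vectors of sup-norm 1 is
  attained on a compact set, hence positive; rescaling gives \<open>\<bar>coord x b\<bar> \<le> \<parallel>x\<parallel> / \<mu>\<close>.\<close>
lemma coord_bounded: "\<exists>K>0. \<forall>x b. \<bar>coord x b\<bar> \<le> K * norm x"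
proof (cases "B = {}")
  case True
  then show ?thesis using coord_outside by (intro exI[of _ 1]) auto
next
  case False
  define \<Phi> where "\<Phi> c = (\<Sum>b\<in>B. c b *\<^sub>R b)" for c :: "'a \<Rightarrow> real"
  have cont_app: "continuous_on A (\<lambda>c::'a\<Rightarrow>real. c b)" for A b
    by (rule continuous_on_subset[OF continuous_on_product_coordinates]) simp
  have cont_\<Phi>: "continuous_on A \<Phi>" for A
    unfolding \<Phi>_def by (intro continuous_intros cont_app)
  define Q where "Q = PiE UNIV (\<lambda>b. if b \<in> B then {-1..1::real} else {0})"
  define C where "C = (\<Union>b\<in>B. {c::'a\<Rightarrow>real. \<bar>c b\<bar> = 1})"
  have "closed C"
    unfolding C_def
    by (intro closed_UN finite_B ballI closed_Collect_eq continuous_intros cont_app)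
  then have compact_S: "compact (Q \<inter> C)"
    unfolding Q_def by (intro compact_Int_closed compact_PiE_UNIV) auto
  obtain b0 where b0: "b0 \<in> B" using False by blast
  have "(\<lambda>b. if b = b0 then 1 else 0) \<in> Q \<inter> C"
    unfolding Q_def C_def using b0 by auto
  then obtain c0 where c0: "c0 \<in> Q \<inter> C" and c0_min: "\<And>c. c \<in> Q \<inter> C \<Longrightarrow> norm (\<Phi> c0) \<le> norm (\<Phi> c)"
    using continuous_attains_inf[OF compact_S _ continuous_on_norm[OF cont_\<Phi>]] by blast
  define \<mu> where "\<mu> = norm (\<Phi> c0)"
  have "\<mu> > 0"
  proof (rule ccontr)
    assume "\<not> \<mu> > 0"
    then have "\<Phi> c0 = 0" unfolding \<mu>_def by simp
    moreover obtain b1 where "b1 \<in> B" "\<bar>c0 b1\<bar> = 1" using c0 unfolding C_def by blast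
    ultimately have "dependent B"
      unfolding \<Phi>_def real_vector.dependent_finite[OF finite_B] by (metis abs_zero zero_neq_one)
    then show False using independent_B by blast
  qed
  show ?thesis
  proof (intro exI[of _ "1/\<mu>"] conjI allI)
    show "1/\<mu> > 0" using \<open>\<mu> > 0\<close> by simp
    fix x b
    define M where "M = Max ((\<lambda>b. \<bar>coord x b\<bar>) ` B)"
    have coord_le_M: "\<bar>coord x b'\<bar> \<le> M" for b'
    proof (cases "b' \<in> B")
      case True
      then show ?thesis unfolding M_def using finite_B by simp
    next
      case False
      have "\<bar>coord x b0\<bar> \<le> M" unfolding M_def using finite_B b0 by simp
      then show ?thesis using False by (simp add: coord_outside)
    qed
    show "\<bar>coord x b\<bar> \<le> 1/\<mu> * norm x"
    proof (cases "M = 0")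
      case True
      then show ?thesis using coord_le_M[of b] \<open>\<mu> > 0\<close> by simp
    next
      case False
      then have "M > 0" using coord_le_M[of b0] by linarith
      have "M \<in> (\<lambda>b. \<bar>coord x b\<bar>) ` B" unfolding M_def using finite_B b0 by (intro Max_in) auto
      then obtain bm where bm: "bm \<in> B" "\<bar>coord x bm\<bar> = M" by blast
      define c where "c = (\<lambda>b. coord x b / M)"
      have "c b \<in> (if b \<in> B then {-1..1} else {0})" for b
        using coord_le_M[of b] \<open>M > 0\<close>
        by (simp add: c_def abs_divide abs_le_iff coord_outside field_simps)
      then have "c \<in> Q"
        by (simp add: Q_def PiE_UNIV_domain)
      moreover have "c \<in> C"
        unfolding C_def c_def using bm \<open>M > 0\<close> by (auto intro!: bexI[of _ bm])
      ultimately have "\<mu> \<le> norm (\<Phi> c)" using c0_min unfolding \<mu>_def by blast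
      also have "\<Phi> c = (1/M) *\<^sub>R (\<Sum>b\<in>B. coord x b *\<^sub>R b)"
        unfolding \<Phi>_def c_def scaleR_sum_right by (simp add: divide_inverse mult.commute)
      also have "\<dots> = (1/M) *\<^sub>R x" by (simp only: sum_coord)
      finally have "M \<le> norm x / \<mu>" using \<open>M > 0\<close> \<open>\<mu> > 0\<close> by (simp add: field_simps)
      then show ?thesis using coord_le_M[of b] by simp
    qed
  qed
qed

lemma bounded_linear_coord: "bounded_linear (\<lambda>x. coord x b)"
proof -
  obtain K where "\<forall>x b. \<bar>coord x b\<bar> \<le> K * norm x" using coord_bounded by blast
  then show ?thesis
    by (intro bounded_linear_intro[where K=K]) (auto simp: mult.commute)
qed

lemma continuous_on_coord [continuous_intros]:
  "continuous_on S f \<Longrightarrow> continuous_on S (\<lambda>x. coord (f x) b)"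
  by (rule bounded_linear.continuous_on[OF bounded_linear_coord])

lemma linear_imp_bounded_linear:
  fixes f :: "'a \<Rightarrow> 'b::real_normed_vector"
  assumes "linear f"
  shows "bounded_linear f"
proof -
  obtain K where K: "\<And>x b. \<bar>coord x b\<bar> \<le> K * norm x" using coord_bounded by blast
  have "norm (f x) \<le> norm x * (K * (\<Sum>b\<in>B. norm (f b)))" for x
  proof -
    have "norm (f x) = norm (\<Sum>b\<in>B. coord x b *\<^sub>R f b)"
      using assms by (metis (no_types, lifting) sum.cong linear_sum linear_scale sum_coord)
    also have "\<dots> \<le> (\<Sum>b\<in>B. (K * norm x) * norm (f b))"
      by (intro sum_norm_le) (simp add: mult_right_mono K)
    finally show ?thesis by (simp add: sum_distrib_left algebra_simps)
  qed
  then show ?thesis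
    using assms by (intro bounded_linear_intro[where K="K * (\<Sum>b\<in>B. norm (f b))"])
      (auto simp: linear_add linear_scale)
qed

lemma bounded_closed_imp_compact:
  fixes S :: "'a set"
  assumes "closed S" "bounded S"
  shows "compact S"
proof -
  obtain K where K: "K > 0" "\<And>x b. \<bar>coord x b\<bar> \<le> K * norm x" using coord_bounded by blast
  obtain R where R: "\<And>x. x \<in> S \<Longrightarrow> norm x \<le> R"
    using assms(2) unfolding bounded_iff by blast
  define \<Phi> where "\<Phi> c = (\<Sum>b\<in>B. c b *\<^sub>R b)" for c :: "'a \<Rightarrow> real"
  have cont_\<Phi>: "continuous_on A \<Phi>" for A
    unfolding \<Phi>_def
    by (intro continuous_intros continuous_on_subset[OF continuous_on_product_coordinates]) simp
  define Q where "Q = PiE UNIV (\<lambda>b. if b \<in> B then {-(K*R)..K*R} else {0})"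
  have "S \<subseteq> \<Phi> ` Q"
  proof
    fix x assume x: "x \<in> S"
    have "coord x b \<in> {-(K*R)..K*R}" for b
    proof -
      have "\<bar>coord x b\<bar> \<le> K * R"
        using K(2)[of x b] mult_left_mono[OF R[OF x] less_imp_le[OF K(1)]] by linarith
      then show ?thesis by (simp add: abs_le_iff)
    qed
    then have "coord x \<in> Q"
      by (auto simp: Q_def PiE_UNIV_domain coord_outside)
    moreover have "\<Phi> (coord x) = x" unfolding \<Phi>_def by (rule sum_coord)
    ultimately show "x \<in> \<Phi> ` Q" by (metis image_eqI)
  qed
  moreover have "compact (\<Phi> ` Q)"
    unfolding Q_def by (intro compact_continuous_image cont_\<Phi> compact_PiE_UNIV) simp
  ultimately show ?thesis
    using compact_Int_closed[OF _ assms(1)] by (metis inf.absorb_iff2)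
qed

lemma compact_cball: "compact (cball (x::'a) r)"
  by (rule bounded_closed_imp_compact) auto

end

lemma convex_comb_ge_imp_eq:
  fixes a b c u :: real
  assumes "0 < u" "u < 1" "a \<le> c" "b \<le> c" "c \<le> (1 - u) * a + u * b"
  shows "a = c \<and> b = c"
proof -
  have "(1 - u) * (c - a) + u * (c - b) \<le> 0" using assms(5) by (simp add: algebra_simps)
  moreover have "(1 - u) * (c - a) \<ge> 0" "u * (c - b) \<ge> 0" using assms(1-4) by simp_all
  ultimately have "(1 - u) * (c - a) = 0" "u * (c - b) = 0" by linarith+
  then show ?thesis using assms(1,2) by simp
qed

lemma convex_on_bounded_linear:
  fixes f :: "'a::real_normed_vector \<Rightarrow> real"
  assumes "bounded_linear f" "convex S"
  shows "convex_on S f"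
  using assms by (intro convex_onI) (simp_all add: linear_add linear_scale bounded_linear.linear)

lemma convex_on_norm_blinfun_apply:
  assumes "convex S"
  shows "convex_on S (\<lambda>x. norm (blinfun_apply A x))"
proof (rule convex_onI[OF _ assms])
  fix t :: real and x y assume "0 < t" "t < 1"
  then show "norm (A ((1 - t) *\<^sub>R x + t *\<^sub>R y)) \<le> (1 - t) * norm (A x) + t * norm (A y)"
    by (simp add: blinfun.add_right blinfun.scaleR_right)
      (metis norm_triangle_ineq norm_scaleR abs_of_pos diff_gt_0_iff_gt)
qed

lemma abs_le_norm_if_le_on_unit_ball:
  fixes f :: "'a::real_normed_vector \<Rightarrow> real"
  assumes f: "linear f" and le: "\<And>v. norm v \<le> 1 \<Longrightarrow> f v \<le> c"
  shows "\<bar>f x\<bar> \<le> c * norm x"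
proof (cases "x = 0")
  case True
  then show ?thesis using f by (simp add: linear_0)
next
  case False
  define v where "v = x /\<^sub>R norm x"
  have "f v \<le> c" "f (- v) \<le> c"
    using False by (auto simp: v_def intro!: le)
  then have "\<bar>f v\<bar> \<le> c" using f by (simp add: linear_neg)
  moreover have "f x = norm x * f v"
    using f False unfolding v_def by (simp add: linear_scale)
  ultimately show ?thesis
    by (simp add: abs_mult) (metis mult.commute mult_left_mono norm_ge_zero)
qed

context finite_basis
begin

definition coord_inner :: "'a \<Rightarrow> 'a \<Rightarrow> real" where
  "coord_inner x y = (\<Sum>b\<in>B. coord x b * coord y b)"

lemma continuous_on_coord_inner [continuous_intros]:
  "continuous_on S f \<Longrightarrow> continuous_on S g \<Longrightarrow> continuous_on S (\<lambda>x. coord_inner (f x) (g x))"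
  unfolding coord_inner_def by (intro continuous_intros)

lemma coord_inner_self_nonneg: "coord_inner x x \<ge> 0"
  unfolding coord_inner_def by (intro sum_nonneg) simp

lemma coord_inner_self_pos:
  assumes "x \<noteq> 0"
  shows "coord_inner x x > 0"
proof -
  obtain b where b: "b \<in> B" "coord x b \<noteq> 0"
    using coord_eq_0_imp_eq_0 assms by blast
  have "coord x b * coord x b \<le> coord_inner x x"
    unfolding coord_inner_def using b finite_B by (intro member_le_sum) auto
  moreover have "coord x b * coord x b > 0" using b(2) not_real_square_gt_zero by blast
  ultimately show ?thesis by linarith
qed

lemma coord_inner_diff_right: "coord_inner x (y - z) = coord_inner x y - coord_inner x z"
  unfolding coord_inner_def by (simp add: sum_subtractf algebra_simps)

lemma linear_coord_inner: "linear (coord_inner x)"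
  unfolding coord_inner_def
  by (intro linearI) (simp_all add: sum.distrib algebra_simps sum_distrib_left)

lemma coord_inner_self_convex_comb:
  "coord_inner ((1 - u) *\<^sub>R a + u *\<^sub>R b) ((1 - u) *\<^sub>R a + u *\<^sub>R b)
     = (1 - u) * coord_inner a a + u * coord_inner b b - u * (1 - u) * coord_inner (a - b) (a - b)"
  unfolding coord_inner_def
  by (simp add: sum_distrib_left sum_subtractf[symmetric] sum.distrib[symmetric])
     (intro sum.cong refl, simp add: algebra_simps)

lemma coord_inner_self_shift:
  "coord_inner (x - t *\<^sub>R d) (x - t *\<^sub>R d) = coord_inner x x - 2 * t * coord_inner x d + t\<^sup>2 * coord_inner d d"
  unfolding coord_inner_def
  by (simp add: sum_distrib_left sum_subtractf[symmetric] sum.distrib[symmetric])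
     (intro sum.cong refl, simp add: power2_eq_square algebra_simps)

text \<open>Among the maximisers of \<open>\<phi>\<close> pick one maximising the strictly convex function
  \<open>coord_inner x x\<close>; it cannot be an interior point of a segment.\<close>
lemma convex_on_attains_max_at_extreme_point:
  fixes K :: "'a set" and \<phi> :: "'a \<Rightarrow> real"
  assumes K: "compact K" "K \<noteq> {}" and \<phi>: "continuous_on K \<phi>" "convex_on K \<phi>"
  shows "\<exists>e. e extreme_point_of K \<and> (\<forall>x\<in>K. \<phi> x \<le> \<phi> e)"
proof -
  obtain x0 where x0: "x0 \<in> K" "\<forall>x\<in>K. \<phi> x \<le> \<phi> x0"
    using continuous_attains_sup[OF K \<phi>(1)] by blast
  define K' where "K' = K \<inter> \<phi> -` {\<phi> x0}"
  have "closed K'"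
    unfolding K'_def
    by (rule continuous_closed_preimage[OF \<phi>(1) compact_imp_closed[OF K(1)] closed_singleton])
  with compact_Int_closed[OF K(1)] have "compact K'"
    by (metis K'_def Int_left_absorb)
  moreover have "x0 \<in> K'" unfolding K'_def using x0 by simp
  moreover have "continuous_on K' (\<lambda>y. coord_inner y y)" by (intro continuous_intros)
  ultimately obtain e where e: "e \<in> K'" and e_max: "\<forall>y\<in>K'. coord_inner y y \<le> coord_inner e e"
    using continuous_attains_sup[of K' "\<lambda>y. coord_inner y y"] by blast
  have eK: "e \<in> K" and \<phi>e: "\<phi> e = \<phi> x0" using e unfolding K'_def by auto
  have "e extreme_point_of K"
    unfolding extreme_point_of_def
  proof (intro conjI eK ballI notI)
    fix a b assume a: "a \<in> K" and b: "b \<in> K" and "e \<in> open_segment a b"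
    then obtain u where "a \<noteq> b" and u: "0 < u" "u < 1" and e_eq: "e = (1 - u) *\<^sub>R a + u *\<^sub>R b"
      unfolding in_segment by blast
    have "\<phi> e \<le> (1 - u) * \<phi> a + u * \<phi> b"
      unfolding e_eq using convex_onD[OF \<phi>(2), of u a b] u a b by simp
    then have "\<phi> a = \<phi> x0 \<and> \<phi> b = \<phi> x0"
      using convex_comb_ge_imp_eq[OF u, of "\<phi> a" "\<phi> x0" "\<phi> b"] x0(2) a b \<phi>e by simp
    then have "a \<in> K'" "b \<in> K'" unfolding K'_def using a b by auto
    then have "coord_inner a a \<le> coord_inner e e" "coord_inner b b \<le> coord_inner e e"
      using e_max by auto
    then have "(1 - u) * coord_inner a a + u * coord_inner b b \<le> (1 - u) * coord_inner e e + u * coord_inner e e"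
      using u by (intro add_mono mult_left_mono) auto
    then have "(1 - u) * coord_inner a a + u * coord_inner b b \<le> coord_inner e e"
      by (simp add: algebra_simps)
    moreover have "u * (1 - u) * coord_inner (a - b) (a - b) > 0"
      using \<open>a \<noteq> b\<close> u by (simp add: coord_inner_self_pos)
    ultimately show False
      using coord_inner_self_convex_comb[of u a b] unfolding e_eq[symmetric] by linarith
  qed
  then show ?thesis using x0(2) \<phi>e by auto
qed

text \<open>The functional is \<open>coord_inner (w - p)\<close> for the point \<open>p \<in> K\<close> nearest to \<open>w\<close>
  in the auxiliary Euclidean structure.\<close>
lemma separating_functional:
  fixes K :: "'a set"
  assumes K: "compact K" "convex K" "K \<noteq> {}" and w: "w \<notin> K"
  shows "\<exists>f::'a \<Rightarrow> real. bounded_linear f \<and> (\<forall>v\<in>K. f v < f w)"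
proof -
  have "continuous_on K (\<lambda>v. coord_inner (w - v) (w - v))" by (intro continuous_intros)
  then obtain p where p: "p \<in> K" and p_min: "\<forall>v\<in>K. coord_inner (w - p) (w - p) \<le> coord_inner (w - v) (w - v)"
    using continuous_attains_inf[OF K(1,3)] by blast
  define f where "f = coord_inner (w - p)"
  have le: "f v \<le> f p" if v: "v \<in> K" for v
  proof (rule ccontr)
    define d where "d = v - p"
    define D where "D = coord_inner (w - p) d"
    assume "\<not> f v \<le> f p"
    then have "D > 0" unfolding D_def d_def f_def coord_inner_diff_right by simp
    define t where "t = min 1 (D / (coord_inner d d + 1))"
    have qd: "coord_inner d d \<ge> 0" by (rule coord_inner_self_nonneg)
    have t: "0 < t" "t \<le> 1" unfolding t_def using \<open>D > 0\<close> qd by auto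
    have "(1 - t) *\<^sub>R p + t *\<^sub>R v \<in> K"
      using convexD[OF K(2) p v, of "1 - t" t] t by simp
    moreover have "w - ((1 - t) *\<^sub>R p + t *\<^sub>R v) = (w - p) - t *\<^sub>R d"
      by (simp add: d_def algebra_simps)
    ultimately have "coord_inner (w - p) (w - p) \<le> coord_inner ((w - p) - t *\<^sub>R d) ((w - p) - t *\<^sub>R d)"
      using p_min by metis
    then have "2 * t * D \<le> t\<^sup>2 * coord_inner d d"
      unfolding coord_inner_self_shift D_def by simp
    then have "2 * D \<le> t * coord_inner d d"
      using t by (simp add: power2_eq_square mult.assoc)
    also have "\<dots> \<le> D / (coord_inner d d + 1) * coord_inner d d"
      unfolding t_def using qd by (intro mult_right_mono) auto
    also have "\<dots> < D"
      using \<open>D > 0\<close> qd by (simp add: field_simps)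
    finally show False using \<open>D > 0\<close> by linarith
  qed
  have "f w - f p = coord_inner (w - p) (w - p)"
    unfolding f_def coord_inner_diff_right ..
  moreover have "w - p \<noteq> 0" using p w by auto
  ultimately have "f p < f w" using coord_inner_self_pos by fastforce
  with le have "\<forall>v\<in>K. f v < f w" by fastforce
  moreover have "bounded_linear f"
    unfolding f_def by (rule linear_imp_bounded_linear[OF linear_coord_inner])
  ultimately show ?thesis by blast
qed

end

section \<open>The dual space\<close>

lemma extreme_point_of_cball_uminus:
  fixes x :: "'a::real_normed_vector"
  assumes "x extreme_point_of cball 0 1"
  shows "(- x) extreme_point_of cball 0 1"
  unfolding extreme_point_of_def
proof (intro conjI ballI notI)
  show "- x \<in> cball 0 1" using assms unfolding extreme_point_of_def by simp
  fix a b assume ab: "a \<in> cball (0::'a) 1" "b \<in> cball (0::'a) 1" and "- x \<in> open_segment a b"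
  then have "x \<in> open_segment (- a) (- b)"
    by (auto simp: in_segment algebra_simps minus_equation_iff[of x])
  moreover have "- a \<in> cball 0 1" "- b \<in> cball 0 1" using ab by auto
  ultimately show False using assms unfolding extreme_point_of_def by blast
qed

context finite_basis
begin

definition coord_functional :: "'a \<Rightarrow> 'a \<Rightarrow>\<^sub>L real" where
  "coord_functional b = Blinfun (\<lambda>x. coord x b)"

lemma coord_functional_apply [simp]: "coord_functional b x = coord x b"
  unfolding coord_functional_def by (simp add: bounded_linear_Blinfun_apply[OF bounded_linear_coord])

lemma span_coord_functionals: "span (coord_functional ` B) = UNIV"
proof -
  have "g = (\<Sum>b\<in>B. g b *\<^sub>R coord_functional b)" for g :: "'a \<Rightarrow>\<^sub>L real"
  proof (rule blinfun_eqI)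
    fix x
    have "g x = g (\<Sum>b\<in>B. coord x b *\<^sub>R b)" by (simp only: sum_coord)
    then show "g x = (\<Sum>b\<in>B. g b *\<^sub>R coord_functional b) x"
      by (simp add: blinfun.sum_right blinfun.scaleR_right blinfun.sum_left blinfun.scaleR_left mult.commute)
  qed
  then have "g \<in> span (coord_functional ` B)" for g :: "'a \<Rightarrow>\<^sub>L real"
    by (metis (no_types, lifting) image_eqI real_vector.span_base real_vector.span_scale real_vector.span_sum)
  then show ?thesis by blast
qed

lemma fin_dim_dual: "fin_dim_space TYPE('a \<Rightarrow>\<^sub>L real)"
  unfolding fin_dim_space_def using finite_B span_coord_functionals by blast

lemma dim_UNIV_eq_card: "dim (UNIV::'a set) = card B"
  using real_vector.dim_span_eq_card_independent[OF independent_B] span_B by simp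

lemma dim_dual_le: "dim (UNIV :: ('a \<Rightarrow>\<^sub>L real) set) \<le> dim (UNIV :: 'a set)"
proof -
  have "dim (UNIV :: ('a \<Rightarrow>\<^sub>L real) set) \<le> card (coord_functional ` B)"
    using real_vector.dim_le_card[of UNIV "coord_functional ` B"] span_coord_functionals finite_B by simp
  also have "\<dots> \<le> card B" using finite_B by (rule card_image_le)
  finally show ?thesis by (simp add: dim_UNIV_eq_card)
qed

lemma norm_blinfun_le_1_if_extreme_points:
  fixes A :: "'a \<Rightarrow>\<^sub>L 'b::real_normed_vector"
  assumes "\<And>x. x extreme_point_of cball 0 1 \<Longrightarrow> norm (A x) \<le> 1"
  shows "norm A \<le> 1"
proof (rule norm_blinfun_bound)
  have cont: "continuous_on (cball 0 1) (\<lambda>x. norm (A x))" by (intro continuous_intros)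
  obtain e where "e extreme_point_of cball 0 1" "\<forall>x\<in>cball 0 1. norm (A x) \<le> norm (A e)"
    using convex_on_attains_max_at_extreme_point[OF compact_cball _ cont
        convex_on_norm_blinfun_apply[OF convex_cball]] by auto
  then have le_1: "norm (A x) \<le> 1" if "norm x \<le> 1" for x
    using that assms order_trans by (metis mem_cball_0)
  fix x
  show "norm (A x) \<le> 1 * norm x"
  proof (cases "x = 0")
    case False
    then have "norm (A (x /\<^sub>R norm x)) \<le> 1" by (intro le_1) simp
    with False show ?thesis by (simp add: blinfun.scaleR_right field_simps)
  qed simp
qed simp

lemma exists_norming_functional:
  fixes w :: 'a
  shows "\<exists>g::'a \<Rightarrow>\<^sub>L real. norm g \<le> 1 \<and> blinfun_apply g w = norm w"
proof (cases "w = 0")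
  case True
  then show ?thesis by (intro exI[of _ 0]) simp
next
  case False
  obtain B' :: "('a \<Rightarrow>\<^sub>L real) set" where "finite_basis B'"
    using finite_basis_exists[OF fin_dim_dual] by blast
  then interpret dual: finite_basis B' .
  define u where "u = w /\<^sub>R norm w"
  have "norm u = 1" unfolding u_def using False by simp
  have cont: "continuous_on (cball 0 1) (\<lambda>g::'a \<Rightarrow>\<^sub>L real. g u)" by (intro continuous_intros)
  obtain g0 :: "'a \<Rightarrow>\<^sub>L real"
    where g0: "g0 \<in> cball 0 1" and g0_max: "\<forall>g\<in>cball 0 1. blinfun_apply g u \<le> g0 u"
    using continuous_attains_sup[OF dual.compact_cball _ cont] by auto
  have "1 \<le> g0 u + t" if "t > 0" for t
  proof -
    have outside: "(1 + t) *\<^sub>R u \<notin> cball 0 1" using \<open>norm u = 1\<close> \<open>t > 0\<close> by simp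
    obtain f :: "'a \<Rightarrow> real" where f: "bounded_linear f" "\<forall>v\<in>cball 0 1. f v < f ((1 + t) *\<^sub>R u)"
      using separating_functional[OF compact_cball convex_cball _ outside] by auto
    define c where "c = f ((1 + t) *\<^sub>R u)"
    have lin: "linear f" using f(1) by (rule bounded_linear.linear)
    have "f 0 < c" using f(2) unfolding c_def by simp
    then have "c > 0" using linear_0[OF lin] by simp
    define g where "g = Blinfun (\<lambda>x. f x / c)"
    have g_apply: "g x = f x / c" for x
      unfolding g_def using bounded_linear_Blinfun_apply[OF bounded_linear_compose[OF bounded_linear_divide f(1)]] by simp
    have "norm g \<le> 1"
    proof (rule norm_blinfun_bound)
      fix x
      have "f v \<le> c" if "norm v \<le> 1" for v
      proof -
        have "v \<in> cball 0 1" using that by simp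
        with f(2) have "f v < c" unfolding c_def by blast
        then show ?thesis by simp
      qed
      then have "\<bar>f x\<bar> \<le> c * norm x"
        by (rule abs_le_norm_if_le_on_unit_ball[OF lin])
      have "norm (g x) = \<bar>f x\<bar> / c"
        using \<open>c > 0\<close> unfolding g_apply by simp
      also have "\<dots> \<le> c * norm x / c"
        using \<open>\<bar>f x\<bar> \<le> c * norm x\<close> \<open>c > 0\<close> by (intro divide_right_mono) auto
      also have "\<dots> = 1 * norm x"
        using \<open>c > 0\<close> by simp
      finally show "norm (g x) \<le> 1 * norm x" .
    qed simp
    then have "g u \<le> g0 u" using g0_max by simp
    moreover have "g u = 1 / (1 + t)"
    proof -
      have c: "c = (1 + t) * f u" unfolding c_def using linear_scale[OF lin] by simp
      with \<open>c > 0\<close> \<open>t > 0\<close> have "f u \<noteq> 0" "1 + t \<noteq> 0" by auto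
      have "g u = f u / ((1 + t) * f u)" unfolding g_apply c ..
      also have "\<dots> = 1 / (1 + t)" using \<open>f u \<noteq> 0\<close> by simp
      finally show ?thesis .
    qed
    moreover have "1 - t \<le> 1 / (1 + t)"
      using \<open>t > 0\<close> by (simp add: le_divide_eq algebra_simps)
    ultimately show ?thesis by linarith
  qed
  then have "1 \<le> g0 u" by (rule field_le_epsilon)
  moreover have "g0 u \<le> 1"
    using norm_blinfun[of g0 u] g0 \<open>norm u = 1\<close> by simp
  moreover have "g0 u = g0 w / norm w"
    unfolding u_def by (simp add: blinfun.scaleR_right divide_inverse mult.commute)
  ultimately have "g0 w = norm w"
    using False by simp
  with g0 show ?thesis by (intro exI[of _ g0]) simp
qed

lemma exists_extreme_norming_functional:
  fixes w :: 'a
  shows "\<exists>g::'a \<Rightarrow>\<^sub>L real. g extreme_point_of cball 0 1 \<and> blinfun_apply g w = norm w"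
proof -
  obtain B' :: "('a \<Rightarrow>\<^sub>L real) set" where "finite_basis B'"
    using finite_basis_exists[OF fin_dim_dual] by blast
  then interpret dual: finite_basis B' .
  obtain g0 :: "'a \<Rightarrow>\<^sub>L real" where g0: "norm g0 \<le> 1" "g0 w = norm w"
    using exists_norming_functional by blast
  have "continuous_on (cball 0 1) (\<lambda>g::'a \<Rightarrow>\<^sub>L real. g w)" by (intro continuous_intros)
  moreover have "convex_on (cball 0 1) (\<lambda>g::'a \<Rightarrow>\<^sub>L real. g w)"
    by (intro convex_on_bounded_linear convex_cball bounded_bilinear.bounded_linear_left[OF bounded_bilinear_blinfun_apply])
  ultimately obtain e where e: "e extreme_point_of cball (0::'a \<Rightarrow>\<^sub>L real) 1"
      "\<forall>g\<in>cball 0 1. blinfun_apply g w \<le> e w"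
    using dual.convex_on_attains_max_at_extreme_point[OF dual.compact_cball, of 0 1] by auto
  have "norm w \<le> e w" using e(2) g0 by (metis mem_cball_0)
  moreover have "e w \<le> norm w"
  proof -
    have "norm e \<le> 1" using e(1) unfolding extreme_point_of_def by simp
    then have "norm e * norm w \<le> norm w" by (simp add: mult_left_le_one_le)
    then show ?thesis using norm_blinfun[of e w] by (metis abs_le_D1 order_trans real_norm_def)
  qed
  ultimately show ?thesis using e(1) by (intro exI[of _ e]) simp
qed

lemma exists_functional_nonzero: "(y::'a) \<noteq> 0 \<Longrightarrow> \<exists>g::'a \<Rightarrow>\<^sub>L real. blinfun_apply g y \<noteq> 0"
  using exists_norming_functional[of y] by (metis norm_eq_zero)

lemma dual_ball_iff_le_on_ext_ball:
  fixes g :: "'a \<Rightarrow>\<^sub>L real"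
  shows "norm g \<le> 1 \<longleftrightarrow> (\<forall>p\<in>ext_ball. g p \<le> 1)"
proof
  assume "norm g \<le> 1"
  show "\<forall>p\<in>ext_ball. g p \<le> 1"
  proof
    fix p :: 'a assume "p \<in> ext_ball"
    then have "norm p \<le> 1" unfolding ext_ball_def extreme_point_of_def by simp
    then have "norm g * norm p \<le> 1" using \<open>norm g \<le> 1\<close> by (simp add: mult_le_one)
    then show "g p \<le> 1" using norm_blinfun[of g p] by simp
  qed
next
  assume le: "\<forall>p\<in>ext_ball. g p \<le> 1"
  show "norm g \<le> 1"
  proof (rule norm_blinfun_le_1_if_extreme_points)
    fix x :: 'a assume x: "x extreme_point_of cball 0 1"
    then have "g x \<le> 1" "g (- x) \<le> 1"
      using le extreme_point_of_cball_uminus unfolding ext_ball_def by auto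
    then show "norm (g x) \<le> 1" by (simp add: blinfun.minus_right)
  qed
qed

end

section \<open>Polyhedral spaces\<close>

lemma extreme_point_of_perturbation_eq_0:
  assumes "x extreme_point_of K" "x + d \<in> K" "x - d \<in> K"
  shows "d = 0"
proof (rule ccontr)
  assume "d \<noteq> 0"
  have "x - d \<noteq> x + d"
  proof
    assume "x - d = x + d"
    then have "2 *\<^sub>R d = 0" by (metis add.right_inverse add_left_cancel diff_conv_add_uminus scaleR_2)
    with \<open>d \<noteq> 0\<close> show False by simp
  qed
  then have "midpoint (x - d) (x + d) \<in> open_segment (x - d) (x + d)" by simp
  moreover have "midpoint (x - d) (x + d) = x"
    unfolding midpoint_def by (simp add: scaleR_2[symmetric])
  ultimately show False using assms unfolding extreme_point_of_def by metis
qed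

lemma norm_extreme_point_of_cball:
  fixes x v :: "'a::real_normed_vector"
  assumes x: "x extreme_point_of cball 0 1" and "v \<noteq> 0"
  shows "norm x = 1"
proof (rule ccontr)
  assume "norm x \<noteq> 1"
  moreover have "norm x \<le> 1" using x unfolding extreme_point_of_def by simp
  ultimately have "norm x < 1" by simp
  define d where "d = ((1 - norm x) / norm v) *\<^sub>R v"
  have "norm d = 1 - norm x" using \<open>v \<noteq> 0\<close> \<open>norm x < 1\<close> by (simp add: d_def)
  then have "norm (x + d) \<le> 1" "norm (x - d) \<le> 1"
    using norm_triangle_ineq[of x d] norm_triangle_ineq4[of x d] by linarith+
  then have "d = 0" by (intro extreme_point_of_perturbation_eq_0[OF x]) simp_all
  with \<open>norm d = 1 - norm x\<close> \<open>norm x < 1\<close> show False by simp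
qed

context finite_basis
begin

text \<open>If \<open>d\<close> vanished off the finitely many points where \<open>g\<close> is strictly below 1, the
  functionals \<open>g \<plusminus> s d\<close> would stay in the dual ball for small \<open>s > 0\<close>.\<close>
lemma eq_0_if_vanishes_on_contact_points:
  fixes g d :: "'a \<Rightarrow>\<^sub>L real"
  assumes fin: "finite (ext_ball :: 'a set)" and g: "g extreme_point_of cball 0 1"
    and d: "\<And>p. p \<in> ext_ball \<Longrightarrow> g p = 1 \<Longrightarrow> d p = 0"
  shows "d = 0"
proof -
  have g_le: "g p \<le> 1" if "p \<in> ext_ball" for p
    using g that dual_ball_iff_le_on_ext_ball unfolding extreme_point_of_def by auto
  define S where "S = {p\<in>ext_ball. g p < 1}"
  define s where "s = (if S = {} then 1 else Min ((\<lambda>p. (1 - g p) / (\<bar>d p\<bar> + 1)) ` S))"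
  have "finite S" unfolding S_def using fin by simp
  then have "s > 0" unfolding s_def by (auto simp: S_def)
  have step: "g p + s * \<bar>d p\<bar> \<le> 1" if p: "p \<in> ext_ball" for p
  proof (cases "p \<in> S")
    case True
    then have "s \<le> (1 - g p) / (\<bar>d p\<bar> + 1)"
      unfolding s_def using \<open>finite S\<close> by auto
    then have "s * (\<bar>d p\<bar> + 1) \<le> 1 - g p"
      by (simp add: le_divide_eq add_pos_nonneg)
    then show ?thesis using \<open>s > 0\<close> by (simp add: algebra_simps)
  next
    case False
    then show ?thesis using d[OF p] g_le[OF p] p by (simp add: S_def)
  qed
  have "norm (g + r *\<^sub>R d) \<le> 1" if "\<bar>r\<bar> \<le> s" for r
    unfolding dual_ball_iff_le_on_ext_ball
  proof
    fix p :: 'a assume p: "p \<in> ext_ball"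
    have "r * d p \<le> \<bar>r\<bar> * \<bar>d p\<bar>" by (metis abs_ge_self abs_mult)
    also have "\<dots> \<le> s * \<bar>d p\<bar>" using that by (simp add: mult_right_mono)
    finally show "(g + r *\<^sub>R d) p \<le> 1"
      using step[OF p] by (simp add: blinfun.add_left blinfun.scaleR_left)
  qed
  from this[of s] this[of "- s"] \<open>s > 0\<close> have "s *\<^sub>R d = 0"
    by (intro extreme_point_of_perturbation_eq_0[OF g]) auto
  with \<open>s > 0\<close> show ?thesis by simp
qed

lemma finite_dual_ext_ball:
  assumes fin: "finite (ext_ball :: 'a set)"
  shows "finite (ext_ball :: ('a \<Rightarrow>\<^sub>L real) set)"
proof -
  define contact where "contact g = {p\<in>ext_ball. blinfun_apply g p = 1}" for g :: "'a \<Rightarrow>\<^sub>L real"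
  have "inj_on contact ext_ball"
  proof (rule inj_onI)
    fix g h :: "'a \<Rightarrow>\<^sub>L real"
    assume "g \<in> ext_ball" "contact g = contact h"
    then have "g - h = 0"
      by (intro eq_0_if_vanishes_on_contact_points[OF fin])
        (auto simp: ext_ball_def contact_def blinfun.diff_left set_eq_iff)
    then show "g = h" by simp
  qed
  moreover have "contact ` ext_ball \<subseteq> Pow ext_ball" unfolding contact_def by auto
  ultimately show ?thesis
    using fin by (meson finite_Pow_iff finite_subset finite_imageD)
qed

text \<open>Away from the finitely many extreme functionals that norm \<open>y\<close>, the extreme
  functionals stay uniformly below 1 at \<open>y\<close>; the one norming \<open>y + t z\<close> therefore
  either norms \<open>y\<close> (and kills \<open>z\<close>) or leaves room for a step of size \<open>\<bar>t\<bar> \<le> \<epsilon>\<close>.\<close>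
lemma small_step_in_unit_ball:
  fixes y z :: 'a
  assumes fin: "finite (ext_ball :: 'a set)" and y: "norm y = 1"
    and z: "\<And>g. g extreme_point_of supp_fun y \<Longrightarrow> blinfun_apply g z = 0"
  shows "\<exists>\<epsilon>>0. \<forall>t. \<bar>t\<bar> \<le> \<epsilon> \<longrightarrow> norm (y + t *\<^sub>R z) \<le> 1"
proof -
  define F where "F = {g \<in> (ext_ball :: ('a \<Rightarrow>\<^sub>L real) set). g y < 1}"
  have "finite F" unfolding F_def using finite_dual_ext_ball[OF fin] by simp
  define \<delta> where "\<delta> = (if F = {} then 1 else Min ((\<lambda>g. 1 - blinfun_apply g y) ` F))"
  have "\<delta> > 0" unfolding \<delta>_def using \<open>finite F\<close> by (auto simp: F_def)
  have \<delta>_le: "\<delta> \<le> 1 - g y" if "g \<in> F" for g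
    unfolding \<delta>_def using that \<open>finite F\<close> by auto
  define \<epsilon> where "\<epsilon> = \<delta> / (norm z + 1)"
  have "\<epsilon> > 0" unfolding \<epsilon>_def using \<open>\<delta> > 0\<close> by (simp add: add_nonneg_pos)
  have "\<epsilon> * norm z \<le> \<epsilon> * (norm z + 1)" using \<open>\<epsilon> > 0\<close> by simp
  also have "\<dots> = \<delta>"
  proof -
    have "norm z + 1 \<noteq> 0" using norm_ge_zero[of z] by linarith
    then show ?thesis unfolding \<epsilon>_def by simp
  qed
  finally have "\<epsilon> * norm z \<le> \<delta>" .
  have "norm (y + t *\<^sub>R z) \<le> 1" if t: "\<bar>t\<bar> \<le> \<epsilon>" for t
  proof -
    obtain g :: "'a \<Rightarrow>\<^sub>L real" where g: "g extreme_point_of cball 0 1"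
      and g_norming: "g (y + t *\<^sub>R z) = norm (y + t *\<^sub>R z)"
      using exists_extreme_norming_functional by blast
    have "norm g \<le> 1" using g unfolding extreme_point_of_def by simp
    then have "\<bar>g y\<bar> \<le> 1" using norm_blinfun[of g y] y by simp
    then have gy: "g y \<le> 1" by simp
    have gz: "\<bar>g z\<bar> \<le> norm z"
      using norm_blinfun[of g z] mult_right_mono[OF \<open>norm g \<le> 1\<close> norm_ge_zero[of z]] by simp
    have g_sum: "g (y + t *\<^sub>R z) = g y + t * g z"
      by (simp add: blinfun.add_right blinfun.scaleR_right)
    show ?thesis
    proof (cases "g y = 1")
      case True
      then have "norm g = 1" using norm_blinfun[of g y] y \<open>norm g \<le> 1\<close> by simp
      with True have "g \<in> supp_fun y" unfolding supp_fun_def by simp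
      moreover have "supp_fun y \<subseteq> cball 0 1" unfolding supp_fun_def by auto
      ultimately have "g extreme_point_of supp_fun y"
        using g unfolding extreme_point_of_def by blast
      then show ?thesis using z g_norming g_sum True by simp
    next
      case False
      then have "g \<in> F" unfolding F_def ext_ball_def using g gy by simp
      have "t * g z \<le> \<bar>t\<bar> * \<bar>g z\<bar>" by (metis abs_ge_self abs_mult)
      also have "\<dots> \<le> \<epsilon> * norm z" using t gz by (intro mult_mono) auto
      finally show ?thesis
        using \<delta>_le[OF \<open>g \<in> F\<close>] \<open>\<epsilon> * norm z \<le> \<delta>\<close> g_norming g_sum by linarith
    qed
  qed
  with \<open>\<epsilon> > 0\<close> show ?thesis by blast
qed

end

section \<open>Extreme contractions\<close>

definition annihilates ::
    "'a::real_normed_vector set \<Rightarrow> ('a \<Rightarrow> ('b::real_normed_vector \<Rightarrow>\<^sub>L real) set) \<Rightarrow> ('a \<Rightarrow>\<^sub>L 'b) \<Rightarrow> bool"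
  where "annihilates E G S \<longleftrightarrow> (\<forall>x\<in>E. \<forall>g\<in>G x. blinfun_apply g (blinfun_apply S x) = 0)"

definition extreme_supports ::
    "('a::real_normed_vector \<Rightarrow>\<^sub>L 'b::real_normed_vector) \<Rightarrow> 'a \<Rightarrow> ('b \<Rightarrow>\<^sub>L real) set"
  where "extreme_supports T x = {g. g extreme_point_of supp_fun (blinfun_apply T x)}"

lemma obtain_nonzero_image_if_norm_eq_1:
  fixes T :: "'a::real_normed_vector \<Rightarrow>\<^sub>L 'b::real_normed_vector"
  assumes "norm T = 1"
  obtains v where "v \<noteq> 0" "T v \<noteq> 0"
proof -
  have "T \<noteq> 0" using assms by auto
  then obtain v where "T v \<noteq> 0" by (metis blinfun_eqI zero_blinfun.rep_eq)
  moreover from this have "v \<noteq> 0" by auto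
  ultimately show ?thesis using that by blast
qed

lemma extreme_contraction_if_annihilates_only_0:
  fixes T :: "'a::real_normed_vector \<Rightarrow>\<^sub>L 'b::real_normed_vector"
  assumes "norm T = 1" and only_0: "\<And>S. annihilates (norm_attain T \<inter> ext_ball) (extreme_supports T) S \<Longrightarrow> S = 0"
  shows "extreme_contraction T"
  unfolding extreme_contraction_def extreme_point_of_def
proof (intro conjI ballI notI)
  show "T \<in> cball 0 1" using \<open>norm T = 1\<close> by simp
  fix A B assume A: "A \<in> cball (0::'a \<Rightarrow>\<^sub>L 'b) 1" and B: "B \<in> cball (0::'a \<Rightarrow>\<^sub>L 'b) 1"
    and "T \<in> open_segment A B"
  then obtain u where "A \<noteq> B" and u: "0 < u" "u < 1" and T: "T = (1 - u) *\<^sub>R A + u *\<^sub>R B"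
    unfolding in_segment by blast
  have "annihilates (norm_attain T \<inter> ext_ball) (extreme_supports T) (A - B)"
    unfolding annihilates_def
  proof (intro ballI)
    fix x g assume x: "x \<in> norm_attain T \<inter> ext_ball" and "g \<in> extreme_supports T x"
    then have "g \<in> supp_fun (T x)" unfolding extreme_supports_def extreme_point_of_def by simp
    then have "norm g = 1" and gT: "g (T x) = 1" unfolding supp_fun_def by auto
    have "norm x = 1" using x unfolding norm_attain_def by simp
    have le_1: "g (C x) \<le> 1" if "C \<in> cball 0 1" for C :: "'a \<Rightarrow>\<^sub>L 'b"
    proof -
      have "g (C x) \<le> norm g * norm (C x)" using norm_blinfun[of g "C x"] by simp
      also have "\<dots> \<le> norm C" using norm_blinfun[of C x] \<open>norm g = 1\<close> \<open>norm x = 1\<close> by simp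
      finally show ?thesis using that by simp
    qed
    have "g (T x) = (1 - u) * g (A x) + u * g (B x)"
      unfolding T by (simp add: blinfun.add_left blinfun.scaleR_left blinfun.add_right blinfun.scaleR_right)
    then have "g (A x) = 1 \<and> g (B x) = 1"
      using convex_comb_ge_imp_eq[OF u le_1[OF A] le_1[OF B]] gT by simp
    then show "g ((A - B) x) = 0" by (simp add: blinfun.diff_left blinfun.diff_right)
  qed
  then have "A - B = 0" by (rule only_0)
  with \<open>A \<noteq> B\<close> show False by simp
qed

lemma annihilates_imp_small_step:
  fixes T S :: "'a::real_normed_vector \<Rightarrow>\<^sub>L 'b::real_normed_vector"
  assumes Y: "fin_dim_space TYPE('b)" "polyhedral TYPE('b)"
    and "norm T = 1" and S: "annihilates (norm_attain T \<inter> ext_ball) (extreme_supports T) S" and x: "x \<in> ext_ball" "norm x = 1"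
  shows "\<exists>\<epsilon>>0. \<forall>t. \<bar>t\<bar> \<le> \<epsilon> \<longrightarrow> norm (T x + t *\<^sub>R S x) \<le> 1"
proof (cases "norm (T x) = 1")
  case True
  obtain BY :: "'b set" where "finite_basis BY" using finite_basis_exists[OF Y(1)] by blast
  then interpret Y: finite_basis BY .
  have "x \<in> norm_attain T \<inter> ext_ball"
    using x True \<open>norm T = 1\<close> unfolding norm_attain_def by simp
  with S have "\<And>g. g extreme_point_of supp_fun (T x) \<Longrightarrow> g (S x) = 0"
    unfolding annihilates_def extreme_supports_def by blast
  with True show ?thesis
    using Y.small_step_in_unit_ball Y(2) unfolding polyhedral_def by blast
next
  case False
  then have "norm (T x) < 1" using norm_blinfun[of T x] \<open>norm T = 1\<close> x(2) by simp
  define \<epsilon> where "\<epsilon> = (1 - norm (T x)) / (norm S + 1)"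
  have "norm S + 1 > 0" using norm_ge_zero[of S] by linarith
  then have "\<epsilon> > 0" unfolding \<epsilon>_def using \<open>norm (T x) < 1\<close> by simp
  have "norm (T x + t *\<^sub>R S x) \<le> 1" if "\<bar>t\<bar> \<le> \<epsilon>" for t
  proof -
    have "norm (T x + t *\<^sub>R S x) \<le> norm (T x) + \<bar>t\<bar> * norm (S x)"
      using norm_triangle_ineq[of "T x" "t *\<^sub>R S x"] by simp
    also have "\<dots> \<le> norm (T x) + \<epsilon> * (norm S + 1)"
      using that norm_blinfun[of S x] x(2) \<open>\<epsilon> > 0\<close>
      by (intro add_left_mono mult_mono) auto
    also have "\<dots> = 1" unfolding \<epsilon>_def using \<open>norm S + 1 > 0\<close> by simp
    finally show ?thesis .
  qed
  with \<open>\<epsilon> > 0\<close> show ?thesis by blast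
qed

lemma annihilates_only_0_if_extreme_contraction:
  fixes T S :: "'a::real_normed_vector \<Rightarrow>\<^sub>L 'b::real_normed_vector"
  assumes X: "fin_dim_space TYPE('a)" "polyhedral TYPE('a)"
    and Y: "fin_dim_space TYPE('b)" "polyhedral TYPE('b)"
    and "norm T = 1" and T: "extreme_contraction T"
    and S: "annihilates (norm_attain T \<inter> ext_ball) (extreme_supports T) S"
  shows "S = 0"
proof -
  obtain BX :: "'a set" where "finite_basis BX" using finite_basis_exists[OF X(1)] by blast
  then interpret X: finite_basis BX .
  obtain v where "v \<noteq> 0" "T v \<noteq> 0"
    by (rule obtain_nonzero_image_if_norm_eq_1[OF \<open>norm T = 1\<close>])
  then have "norm x = 1" if "x \<in> ext_ball" for x :: 'a
    using norm_extreme_point_of_cball that unfolding ext_ball_def by blast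
  then have "\<forall>x\<in>ext_ball. \<exists>\<epsilon>>0. \<forall>t. \<bar>t\<bar> \<le> \<epsilon> \<longrightarrow> norm (T x + t *\<^sub>R S x) \<le> 1"
    using annihilates_imp_small_step[OF Y \<open>norm T = 1\<close> S] by blast
  then obtain \<epsilon> where \<epsilon>: "\<And>x t. x \<in> ext_ball \<Longrightarrow> \<bar>t\<bar> \<le> \<epsilon> x \<Longrightarrow> norm (T x + t *\<^sub>R S x) \<le> 1"
    and \<epsilon>_pos: "\<And>x. x \<in> ext_ball \<Longrightarrow> \<epsilon> x > 0"
    by metis
  have fin: "finite (ext_ball :: 'a set)" using X(2) unfolding polyhedral_def .
  define s where "s = (if (ext_ball :: 'a set) = {} then 1 else Min (\<epsilon> ` ext_ball))"
  have "s > 0" unfolding s_def using fin \<epsilon>_pos by auto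
  have "s \<le> \<epsilon> x" if "x \<in> ext_ball" for x unfolding s_def using fin that by auto
  then have "norm (T + r *\<^sub>R S) \<le> 1" if "\<bar>r\<bar> \<le> s" for r
    using that \<epsilon> by (intro X.norm_blinfun_le_1_if_extreme_points)
      (force simp: ext_ball_def blinfun.add_left blinfun.scaleR_left)
  from this[of s] this[of "- s"] \<open>s > 0\<close> have "s *\<^sub>R S = 0"
    using T unfolding extreme_contraction_def
    by (intro extreme_point_of_perturbation_eq_0[of T]) auto
  with \<open>s > 0\<close> show ?thesis by simp
qed

lemma extreme_contraction_iff_annihilates_only_0:
  fixes T :: "'a::real_normed_vector \<Rightarrow>\<^sub>L 'b::real_normed_vector"
  assumes "fin_dim_space TYPE('a)" "polyhedral TYPE('a)"
    and "fin_dim_space TYPE('b)" "polyhedral TYPE('b)" and "norm T = 1"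
  shows "extreme_contraction T \<longleftrightarrow>
    (\<forall>S. annihilates (norm_attain T \<inter> ext_ball) (extreme_supports T) S \<longrightarrow> S = 0)"
  using extreme_contraction_if_annihilates_only_0[OF assms(5)]
    annihilates_only_0_if_extreme_contraction[OF assms] by blast

section \<open>Coefficient tuples\<close>

lemma sum_fun_apply: "(sum F A) x = (\<Sum>a\<in>A. F a x)"
  for F :: "'i \<Rightarrow> 'x \<Rightarrow> real"
  by (induction A rule: infinite_finite_induct) simp_all

interpretation tuple: vector_space scale_tuple
  by unfold_locales (simp_all add: scale_tuple_def fun_eq_iff algebra_simps)

definition unit_tuple :: "nat \<Rightarrow> nat \<Rightarrow> nat \<times> nat \<Rightarrow> real" where
  "unit_tuple i j = (\<lambda>x. if x = (i, j) then 1 else 0)"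

definition unit_tuples :: "nat \<Rightarrow> nat \<Rightarrow> (nat \<times> nat \<Rightarrow> real) set" where
  "unit_tuples k p = (\<lambda>(i, j). unit_tuple i j) ` ({..<k} \<times> {..<p})"

definition tuple_space :: "nat \<Rightarrow> nat \<Rightarrow> (nat \<times> nat \<Rightarrow> real) set" where
  "tuple_space k p = {f. \<forall>i j. \<not> (i < k \<and> j < p) \<longrightarrow> f (i, j) = 0}"

definition tuple_pairing :: "nat \<Rightarrow> nat \<Rightarrow> (nat \<Rightarrow> nat \<Rightarrow> real) \<Rightarrow> (nat \<times> nat \<Rightarrow> real) \<Rightarrow> real" where
  "tuple_pairing k p c f = (\<Sum>ij\<in>{..<k} \<times> {..<p}. f ij * case_prod c ij)"

lemma unit_tuple_eq_iff: "unit_tuple i j = unit_tuple i' j' \<longleftrightarrow> i = i' \<and> j = j'"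
  unfolding unit_tuple_def by (metis (mono_tags) prod.inject zero_neq_one)

lemma unit_tuple_mult: "unit_tuple i j x * r = (if x = (i, j) then r else 0)"
  by (simp add: unit_tuple_def)

lemma finite_unit_tuples: "finite (unit_tuples k p)"
  unfolding unit_tuples_def by simp

lemma card_unit_tuples: "card (unit_tuples k p) = k * p"
proof -
  have "inj_on (\<lambda>(i, j). unit_tuple i j) ({..<k} \<times> {..<p})"
    by (auto simp: inj_on_def unit_tuple_eq_iff)
  then show ?thesis unfolding unit_tuples_def by (simp add: card_image card_cartesian_product)
qed

lemma tensor_tuple_in_tuple_space: "tensor_tuple k p \<alpha> \<beta> \<in> tuple_space k p"
  unfolding tuple_space_def tensor_tuple_def by auto

lemma tuple_space_eq_sum:
  assumes "f \<in> tuple_space k p"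
  shows "f = (\<Sum>(i, j)\<in>{..<k} \<times> {..<p}. scale_tuple (f (i, j)) (unit_tuple i j))"
proof
  fix x :: "nat \<times> nat"
  have "(\<Sum>(i, j)\<in>{..<k} \<times> {..<p}. scale_tuple (f (i, j)) (unit_tuple i j)) x
      = (\<Sum>ij\<in>{..<k} \<times> {..<p}. if x = ij then f ij else 0)"
    unfolding sum_fun_apply scale_tuple_def unit_tuple_def by (intro sum.cong) auto
  also have "\<dots> = f x"
    using assms unfolding tuple_space_def by (cases x) (auto simp: sum.delta)
  finally show "f x = (\<Sum>(i, j)\<in>{..<k} \<times> {..<p}. scale_tuple (f (i, j)) (unit_tuple i j)) x" ..
qed

lemma subspace_tuple_space: "tuple.subspace (tuple_space k p)"
  by (rule tuple.subspaceI) (auto simp: tuple_space_def scale_tuple_def)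

lemma span_unit_tuples: "tuple.span (unit_tuples k p) = tuple_space k p"
proof
  have "unit_tuples k p \<subseteq> tuple_space k p"
    unfolding unit_tuples_def tuple_space_def unit_tuple_def by auto
  then show "tuple.span (unit_tuples k p) \<subseteq> tuple_space k p"
    by (rule tuple.span_minimal[OF _ subspace_tuple_space])
  show "tuple_space k p \<subseteq> tuple.span (unit_tuples k p)"
  proof
    fix f assume "f \<in> tuple_space k p"
    then have "f = (\<Sum>(i, j)\<in>{..<k} \<times> {..<p}. scale_tuple (f (i, j)) (unit_tuple i j))"
      by (rule tuple_space_eq_sum)
    also have "\<dots> \<in> tuple.span (unit_tuples k p)"
    proof (rule tuple.span_sum)
      fix ij assume "ij \<in> {..<k} \<times> {..<p}"
      then obtain i j where "ij = (i, j)" "unit_tuple i j \<in> unit_tuples k p"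
        unfolding unit_tuples_def by fastforce
      then show "(case ij of (i, j) \<Rightarrow> scale_tuple (f (i, j)) (unit_tuple i j)) \<in> tuple.span (unit_tuples k p)"
        by (simp add: tuple.span_scale tuple.span_base)
    qed
    finally show "f \<in> tuple.span (unit_tuples k p)" .
  qed
qed

lemma independent_unit_tuples: "tuple.independent (unit_tuples k p)"
proof
  assume "tuple.dependent (unit_tuples k p)"
  then obtain u v where v: "v \<in> unit_tuples k p" "u v \<noteq> 0"
    and sum_0: "(\<Sum>w\<in>unit_tuples k p. scale_tuple (u w) w) = 0"
    using tuple.dependent_finite[OF finite_unit_tuples] by blast
  obtain i j where v_eq: "v = unit_tuple i j" using v(1) unfolding unit_tuples_def by auto
  have val: "w (i, j) = (if w = v then 1 else 0)" if "w \<in> unit_tuples k p" for w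
    using that unfolding unit_tuples_def v_eq by (auto simp: unit_tuple_eq_iff) (auto simp: unit_tuple_def)
  have "(\<Sum>w\<in>unit_tuples k p. scale_tuple (u w) w) (i, j)
      = (\<Sum>w\<in>unit_tuples k p. if w = v then u w else 0)"
    unfolding sum_fun_apply scale_tuple_def by (intro sum.cong refl) (simp add: val)
  also have "\<dots> = u v" using v(1) finite_unit_tuples by (simp add: sum.delta')
  finally show False using sum_0 v(2) by simp
qed

lemma dim_tuple_space: "tuple.dim (tuple_space k p) = k * p"
  using tuple.dim_span_eq_card_independent[OF independent_unit_tuples]
  by (simp add: span_unit_tuples card_unit_tuples)

lemma dim_le_if_subset_tuple_space:
  assumes "Z \<subseteq> tuple_space k p"
  shows "tuple.dim Z \<le> k * p"
  using tuple.dim_le_card[OF _ finite_unit_tuples] assms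
  by (simp add: span_unit_tuples card_unit_tuples)

lemma dim_less_if_proper_subspace_of_tuple_space:
  assumes Z: "tuple.subspace Z" "Z \<subseteq> tuple_space k p" "Z \<noteq> tuple_space k p"
  shows "tuple.dim Z < k * p"
proof -
  obtain e where e: "e \<in> unit_tuples k p" "e \<notin> Z"
    using Z span_unit_tuples tuple.span_minimal[of "unit_tuples k p" Z] by blast
  obtain BZ where BZ: "BZ \<subseteq> Z" "tuple.independent BZ" "Z \<subseteq> tuple.span BZ" "card BZ = tuple.dim Z"
    by (rule tuple.basis_exists)
  have "tuple.span BZ = Z" using BZ Z(1) by (metis tuple.span_subspace)
  then have "tuple.independent (insert e BZ)"
    using BZ(2) e(2) by (intro tuple.independent_insertI) auto
  moreover have "insert e BZ \<subseteq> tuple.span (unit_tuples k p)"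
    using BZ(1) Z(2) e(1) tuple.span_base span_unit_tuples by blast
  ultimately have "card (insert e BZ) \<le> k * p" "finite BZ"
    using tuple.independent_span_bound[OF finite_unit_tuples] card_unit_tuples by fastforce+
  moreover have "e \<notin> BZ" using e(2) BZ(1) by blast
  ultimately show ?thesis using BZ(4) by simp
qed

lemma tuple_subspace_tuple_pairing_eq_0: "tuple.subspace {f. tuple_pairing k p c f = 0}"
proof (rule tuple.subspaceI)
  fix a f assume "f \<in> {f. tuple_pairing k p c f = 0}"
  then show "scale_tuple a f \<in> {f. tuple_pairing k p c f = 0}"
    by (simp add: tuple_pairing_def scale_tuple_def sum_distrib_left[symmetric] mult.assoc)
qed (simp_all add: tuple_pairing_def sum.distrib distrib_right)

lemma tuple_pairing_unit_tuple:
  assumes "i < k" "j < p"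
  shows "tuple_pairing k p c (unit_tuple i j) = c i j"
  using assms by (simp add: tuple_pairing_def unit_tuple_mult sum.delta)

text \<open>The annihilating coefficients are those of the coordinate functional at a unit tuple
  outside \<open>Z\<close>, taken with respect to a basis of the whole space extending one of \<open>Z\<close>.\<close>
lemma proper_subspace_of_tuple_space_annihilated:
  assumes Z: "tuple.subspace Z" "Z \<subseteq> tuple_space k p" "Z \<noteq> tuple_space k p"
  obtains c i0 j0 where "i0 < k" "j0 < p" "c i0 j0 \<noteq> 0" "\<And>f. f \<in> Z \<Longrightarrow> tuple_pairing k p c f = 0"
proof -
  obtain e where e: "e \<in> unit_tuples k p" "e \<notin> Z"
    using Z span_unit_tuples tuple.span_minimal[of "unit_tuples k p" Z] by blast
  then obtain i0 j0 where ij: "i0 < k" "j0 < p" "e = unit_tuple i0 j0"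
    unfolding unit_tuples_def by auto
  obtain BZ where BZ: "BZ \<subseteq> Z" "tuple.independent BZ" "Z \<subseteq> tuple.span BZ"
    by (rule tuple.basis_exists)
  have span_BZ: "tuple.span BZ = Z" using BZ Z(1) by (metis tuple.span_subspace)
  have "tuple.independent (insert e BZ)"
    using BZ(2) span_BZ e(2) by (intro tuple.independent_insertI) auto
  then obtain B where B: "insert e BZ \<subseteq> B" "tuple.independent B" "UNIV \<subseteq> tuple.span B"
    using tuple.maximal_independent_subset_extend[OF subset_UNIV] by metis
  define \<Lambda> where "\<Lambda> f = tuple.representation B f e" for f
  have span: "f \<in> tuple.span B" for f using B(3) by blast
  have \<Lambda>_add: "\<Lambda> (f + g) = \<Lambda> f + \<Lambda> g" for f g
    unfolding \<Lambda>_def using tuple.representation_add[OF B(2) span span] by simp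
  have \<Lambda>_scale: "\<Lambda> (scale_tuple a f) = a * \<Lambda> f" for a f
    unfolding \<Lambda>_def using tuple.representation_scale[OF B(2) span] by simp
  have \<Lambda>_basis: "\<Lambda> b = (if b = e then 1 else 0)" if "b \<in> B" for b
    unfolding \<Lambda>_def using tuple.representation_basis[OF B(2) that] by simp
  have \<Lambda>_sum: "\<Lambda> (\<Sum>x\<in>A. F x) = (\<Sum>x\<in>A. \<Lambda> (F x))" for A and F :: "'x \<Rightarrow> nat \<times> nat \<Rightarrow> real"
    unfolding \<Lambda>_def using tuple.representation_sum[OF B(2), of A F] span by simp
  have "tuple.subspace {f. \<Lambda> f = 0}"
    by (rule tuple.subspaceI) (simp_all add: \<Lambda>_add \<Lambda>_scale, simp add: \<Lambda>_def tuple.representation_zero)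
  moreover have "BZ \<subseteq> {f. \<Lambda> f = 0}"
  proof
    fix b assume "b \<in> BZ"
    then have "b \<in> B" "b \<noteq> e" using B(1) BZ(1) e(2) by auto
    then show "b \<in> {f. \<Lambda> f = 0}" using \<Lambda>_basis by simp
  qed
  ultimately have Z_ker: "\<Lambda> f = 0" if "f \<in> Z" for f
    using span_BZ tuple.span_minimal that by blast
  define c where "c i j = \<Lambda> (unit_tuple i j)" for i j
  show ?thesis
  proof
    show "c i0 j0 \<noteq> 0" unfolding c_def using \<Lambda>_basis[of e] B(1) ij(3) by simp
    fix f assume "f \<in> Z"
    then have "f \<in> tuple_space k p" using Z(2) by blast
    have "\<Lambda> f = \<Lambda> (\<Sum>(i, j)\<in>{..<k} \<times> {..<p}. scale_tuple (f (i, j)) (unit_tuple i j))"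
      using tuple_space_eq_sum[OF \<open>f \<in> tuple_space k p\<close>] by simp
    also have "\<dots> = tuple_pairing k p c f"
      unfolding \<Lambda>_sum tuple_pairing_def c_def by (simp add: case_prod_beta \<Lambda>_scale)
    finally show "tuple_pairing k p c f = 0" using Z_ker[OF \<open>f \<in> Z\<close>] by simp
  qed (use ij in auto)
qed

section \<open>Bases and dual bases\<close>

sublocale finite_basis \<subseteq> fdvs: finite_dimensional_vector_space scaleR B
  rewrites "Vector_Spaces.linear (*\<^sub>R) (*\<^sub>R) = linear"
    and "module.dependent (*\<^sub>R) = dependent"
    and "module.span (*\<^sub>R) = span"
    and "vector_space.dim (*\<^sub>R) = dim"
  by unfold_locales
    (use finite_B independent_B span_B in \<open>auto simp: dependent_raw_def span_raw_def dim_raw_def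
      linear_def real_scaleR_def[abs_def]\<close>)

lemma span_set_obtain_sum_nth:
  fixes vs :: "'v::real_vector list"
  assumes "distinct vs" "x \<in> span (set vs)"
  obtains \<alpha> where "x = (\<Sum>i<length vs. \<alpha> i *\<^sub>R vs ! i)"
proof -
  obtain u where u: "x = (\<Sum>v\<in>set vs. u v *\<^sub>R v)"
    using assms(2) real_vector.span_finite[of "set vs"] by auto
  have "set vs = (!) vs ` {..<length vs}" by (auto simp: set_conv_nth)
  moreover have "inj_on ((!) vs) {..<length vs}"
    using assms(1) by (simp add: inj_on_def nth_eq_iff_index_eq)
  ultimately have "x = (\<Sum>i<length vs. u (vs ! i) *\<^sub>R vs ! i)"
    using u by (simp add: sum.reindex)
  then show ?thesis by (rule that)
qed

lemma representation_sum_nth: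
  fixes bs :: "'v::real_vector list"
  assumes ind: "independent (set bs)" and "distinct bs" "p \<le> length bs" "l < length bs"
  shows "representation (set bs) (\<Sum>i<p. c i *\<^sub>R bs ! i) (bs ! l) = (if l < p then c l else 0)"
proof -
  have span: "bs ! i \<in> span (set bs)" if "i < p" for i
    using that assms(3) by (intro real_vector.span_base) simp
  have "representation (set bs) (\<Sum>i<p. c i *\<^sub>R bs ! i) (bs ! l)
      = (\<Sum>i<p. c i * representation (set bs) (bs ! i) (bs ! l))"
    using real_vector.representation_sum[OF ind, of "{..<p}" "\<lambda>i. c i *\<^sub>R bs ! i"]
      real_vector.representation_scale[OF ind span] span
    by (simp add: real_vector.span_scale)
  also have "\<dots> = (\<Sum>i<p. if i = l then c i else 0)"
    using assms(2-4) real_vector.representation_basis[OF ind]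
    by (intro sum.cong refl) (auto simp: nth_eq_iff_index_eq)
  also have "\<dots> = (if l < p then c l else 0)" by (simp add: sum.delta')
  finally show ?thesis .
qed

context finite_basis
begin

lemma length_le_dim:
  fixes vs :: "'a list"
  assumes "distinct vs" "independent (set vs)"
  shows "length vs \<le> dim (UNIV :: 'a set)"
  using fdvs.independent_card_le_dim[of "set vs" UNIV] assms by (simp add: distinct_card)

lemma span_eq_UNIV_if_dim_le_length:
  fixes vs :: "'a list"
  assumes "distinct vs" "independent (set vs)" "dim (UNIV :: 'a set) \<le> length vs"
  shows "span (set vs) = UNIV"
  using fdvs.card_ge_dim_independent[of "set vs" UNIV] assms by (auto simp: distinct_card)

lemma obtain_basis_list:
  obtains bs where "distinct bs" "set bs = B" "length bs = dim (UNIV :: 'a set)"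
  using finite_distinct_list[OF finite_B] dim_UNIV_eq_card distinct_card by metis

text \<open>The map \<open>\<Phi>\<close> stores the values \<open>(ys ! l) y\<close> as the coordinates of \<open>\<Phi> y\<close>, so that questions
  about the linear map \<open>y \<mapsto> (ys ! l y)\<^sub>l\<close> become questions about an endomorphism.\<close>
lemma obtain_evaluation_endomorphism:
  fixes ys :: "('a \<Rightarrow>\<^sub>L real) list"
  assumes "length ys \<le> dim (UNIV :: 'a set)"
  obtains \<Phi> :: "'a \<Rightarrow> 'a" and bs where "linear \<Phi>" "distinct bs" "set bs = B"
    "length bs = dim (UNIV :: 'a set)"
    "\<And>y l. l < length bs \<Longrightarrow> coord (\<Phi> y) (bs ! l) = (if l < length ys then (ys ! l) y else 0)"
proof -
  obtain bs where bs: "distinct bs" "set bs = B" "length bs = dim (UNIV :: 'a set)"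
    by (rule obtain_basis_list)
  define \<Phi> where "\<Phi> y = (\<Sum>l<length ys. (ys ! l) y *\<^sub>R bs ! l)" for y
  have "linear \<Phi>"
    unfolding \<Phi>_def
    by (intro bounded_linear.linear bounded_linear_sum
        bounded_linear_compose[OF bounded_linear_scaleR_left] blinfun.bounded_linear_right)
  moreover have "coord (\<Phi> y) (bs ! l) = (if l < length ys then (ys ! l) y else 0)"
    if "l < length bs" for y l
    unfolding \<Phi>_def using representation_sum_nth[of bs] bs independent_B assms that by simp
  ultimately show ?thesis using that bs by blast
qed

lemma exists_common_zero:
  fixes ys :: "('a \<Rightarrow>\<^sub>L real) list"
  assumes "length ys < dim (UNIV :: 'a set)"
  obtains y where "y \<noteq> 0" "\<And>j. j < length ys \<Longrightarrow> (ys ! j) y = 0"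
proof -
  obtain \<Phi> bs where \<Phi>: "linear \<Phi>" and bs: "distinct bs" "set bs = B" "length bs = dim (UNIV :: 'a set)"
    and coord_\<Phi>: "\<And>y l. l < length bs \<Longrightarrow> coord (\<Phi> y) (bs ! l) = (if l < length ys then (ys ! l) y else 0)"
    using obtain_evaluation_endomorphism assms by (metis less_imp_le)
  have "bs ! length ys \<notin> range \<Phi>"
  proof
    assume "bs ! length ys \<in> range \<Phi>"
    then obtain y where "\<Phi> y = bs ! length ys" by (metis rangeE)
    moreover have "bs ! length ys \<in> B" using assms bs by (metis nth_mem)
    then have "coord (bs ! length ys) (bs ! length ys) = 1"
      using real_vector.representation_basis[OF independent_B] by simp
    ultimately show False using coord_\<Phi>[of "length ys" y] assms bs by simp
  qed
  then have "\<not> inj \<Phi>" using fdvs.linear_inj_imp_surj[OF \<Phi>] by auto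
  then obtain y where "y \<noteq> 0" "\<Phi> y = 0" using real_vector.linear_inj_iff_eq_0[OF \<Phi>] by blast
  moreover have "(ys ! j) y = 0" if "j < length ys" for j
    using coord_\<Phi>[of j y] \<open>\<Phi> y = 0\<close> that assms bs by (simp add: real_vector.representation_zero)
  ultimately show ?thesis using that by blast
qed

lemma exists_dual_vector:
  fixes ys :: "('a \<Rightarrow>\<^sub>L real) list"
  assumes ys: "distinct ys" "span (set ys) = UNIV" "length ys = dim (UNIV :: 'a set)"
    and "j < length ys"
  obtains y where "\<And>l. l < length ys \<Longrightarrow> (ys ! l) y = (if l = j then 1 else 0)"
proof -
  obtain \<Phi> bs where \<Phi>: "linear \<Phi>" and bs: "distinct bs" "set bs = B" "length bs = dim (UNIV :: 'a set)"
    and coord_\<Phi>: "\<And>y l. l < length bs \<Longrightarrow> coord (\<Phi> y) (bs ! l) = (if l < length ys then (ys ! l) y else 0)"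
    using obtain_evaluation_endomorphism ys(3) by (metis order_refl)
  have "inj \<Phi>"
    unfolding real_vector.linear_inj_iff_eq_0[OF \<Phi>]
  proof (intro allI impI)
    fix y assume "\<Phi> y = 0"
    then have "(ys ! l) y = 0" if "l < length ys" for l
      using coord_\<Phi>[of l y] that ys(3) bs by (simp add: real_vector.representation_zero)
    moreover have "g y = 0" if "g = (\<Sum>i<length ys. \<beta> i *\<^sub>R ys ! i)" for g \<beta>
      using \<open>\<And>l. l < length ys \<Longrightarrow> (ys ! l) y = 0\<close>
      unfolding that by (simp add: blinfun.sum_left blinfun.scaleR_left)
    ultimately have "g y = 0" for g :: "'a \<Rightarrow>\<^sub>L real"
      using span_set_obtain_sum_nth[OF ys(1), of g] ys(2) by blast
    then show "y = 0" using exists_functional_nonzero by blast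
  qed
  then obtain y where "\<Phi> y = bs ! j" using fdvs.linear_inj_imp_surj[OF \<Phi>] by (metis surjD)
  then have "(ys ! l) y = (if l = j then 1 else 0)" if "l < length ys" for l
    using coord_\<Phi>[of l y] real_vector.representation_basis[OF independent_B, of "bs ! j"]
      that \<open>j < length ys\<close> ys(3) bs by (auto simp: nth_eq_iff_index_eq)
  then show ?thesis by (rule that)
qed

lemma exists_functional_vanishing_on_span:
  fixes S :: "'a set"
  assumes "independent S" "a \<notin> span S"
  obtains f :: "'a \<Rightarrow>\<^sub>L real" where "f a = 1" "\<And>x. x \<in> span S \<Longrightarrow> f x = 0"
proof -
  have "independent (insert a S)" using assms by (intro real_vector.independent_insertI)
  then obtain B' where B': "insert a S \<subseteq> B'" "independent B'" "UNIV \<subseteq> span B'"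
    using real_vector.maximal_independent_subset_extend[OF subset_UNIV] by metis
  have "finite B'" using real_vector.independent_span_bound[OF finite_B B'(2)] span_B by auto
  with B' interpret B': finite_basis B' by unfold_locales auto
  have coord_a: "B'.coord_functional a b = (if a = b then 1 else 0)" if "b \<in> B'" for b
    using real_vector.representation_basis[OF B'(2) that] by simp
  have "B'.coord_functional a a = 1" using coord_a B'(1) by simp
  moreover have "B'.coord_functional a x = 0" if "x \<in> span S" for x
  proof (rule real_vector.linear_eq_0_on_span[OF bounded_linear.linear[OF blinfun.bounded_linear_right] _ that])
    fix s assume "s \<in> S"
    moreover from this have "a \<noteq> s" using assms(2) real_vector.span_base by blast
    ultimately show "B'.coord_functional a s = 0" using coord_a B'(1) by auto
  qed
  ultimately show ?thesis by (rule that)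
qed

end

section \<open>The index of smoothness\<close>

definition pairing_matrix ::
    "'a::real_normed_vector list \<Rightarrow> ('b::real_normed_vector \<Rightarrow>\<^sub>L real) list \<Rightarrow> ('a \<Rightarrow>\<^sub>L 'b) \<Rightarrow> nat \<Rightarrow> nat \<Rightarrow> real"
  where "pairing_matrix vs ys S i j = blinfun_apply (ys ! j) (blinfun_apply S (vs ! i))"

definition tensor_generators ::
    "'a::real_normed_vector list \<Rightarrow> ('b::real_normed_vector \<Rightarrow>\<^sub>L real) list \<Rightarrow> 'a set \<Rightarrow>
      ('a \<Rightarrow> ('b \<Rightarrow>\<^sub>L real) set) \<Rightarrow> (nat \<times> nat \<Rightarrow> real) set"
  where "tensor_generators vs ys E G =
    {tensor_tuple (length vs) (length ys) \<alpha> \<beta> | \<alpha> \<beta>.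
       (\<Sum>i<length vs. \<alpha> i *\<^sub>R vs ! i) \<in> E \<and>
       (\<Sum>j<length ys. \<beta> j *\<^sub>R ys ! j) \<in> G (\<Sum>i<length vs. \<alpha> i *\<^sub>R vs ! i)}"

lemma Z_space_eq_span_tensor_generators:
  "Z_space vs ys R T = tuple.span (tensor_generators vs ys (R \<inter> ext_ball) (extreme_supports T))"
  unfolding Z_space_def tensor_generators_def extreme_supports_def by simp

lemma span_tensor_generators_subset:
  "tuple.span (tensor_generators vs ys E G) \<subseteq> tuple_space (length vs) (length ys)"
proof (rule tuple.span_minimal[OF _ subspace_tuple_space])
  show "tensor_generators vs ys E G \<subseteq> tuple_space (length vs) (length ys)"
    unfolding tensor_generators_def using tensor_tuple_in_tuple_space by blast
qed

lemma tuple_pairing_eq_nested_sum: "tuple_pairing k p c f = (\<Sum>i<k. \<Sum>j<p. f (i, j) * c i j)"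
  by (simp add: tuple_pairing_def sum.cartesian_product case_prod_unfold)

lemma tuple_pairing_tensor_tuple:
  "tuple_pairing (length vs) (length ys) (pairing_matrix vs ys S) (tensor_tuple (length vs) (length ys) \<alpha> \<beta>)
     = blinfun_apply (\<Sum>j<length ys. \<beta> j *\<^sub>R ys ! j) (S (\<Sum>i<length vs. \<alpha> i *\<^sub>R vs ! i))"
proof -
  have "blinfun_apply (\<Sum>j<length ys. \<beta> j *\<^sub>R ys ! j) (S (\<Sum>i<length vs. \<alpha> i *\<^sub>R vs ! i))
      = (\<Sum>i<length vs. \<Sum>j<length ys. \<alpha> i * (\<beta> j * pairing_matrix vs ys S i j))"
    by (simp add: pairing_matrix_def blinfun.sum_left blinfun.sum_right blinfun.scaleR_left
        blinfun.scaleR_right sum_distrib_left)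
  also have "\<dots> = (\<Sum>i<length vs. \<Sum>j<length ys.
      tensor_tuple (length vs) (length ys) \<alpha> \<beta> (i, j) * pairing_matrix vs ys S i j)"
    by (intro sum.cong refl) (simp add: tensor_tuple_def)
  finally show ?thesis by (simp add: tuple_pairing_eq_nested_sum)
qed

lemma annihilates_iff_tuple_pairing_eq_0:
  assumes "distinct vs" "distinct ys" "E \<subseteq> span (set vs)" "\<And>x. x \<in> E \<Longrightarrow> G x \<subseteq> span (set ys)"
  shows "annihilates E G S \<longleftrightarrow>
    (\<forall>f\<in>tuple.span (tensor_generators vs ys E G).
       tuple_pairing (length vs) (length ys) (pairing_matrix vs ys S) f = 0)"
proof
  assume "annihilates E G S"
  then have "tensor_generators vs ys E G \<subseteq>
      {f. tuple_pairing (length vs) (length ys) (pairing_matrix vs ys S) f = 0}"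
    unfolding tensor_generators_def annihilates_def by (auto simp: tuple_pairing_tensor_tuple)
  then show "\<forall>f\<in>tuple.span (tensor_generators vs ys E G).
      tuple_pairing (length vs) (length ys) (pairing_matrix vs ys S) f = 0"
    using tuple.span_minimal[OF _ tuple_subspace_tuple_pairing_eq_0] by blast
next
  assume pairing_0: "\<forall>f\<in>tuple.span (tensor_generators vs ys E G).
      tuple_pairing (length vs) (length ys) (pairing_matrix vs ys S) f = 0"
  show "annihilates E G S"
    unfolding annihilates_def
  proof (intro ballI)
    fix x g assume x: "x \<in> E" and g: "g \<in> G x"
    obtain \<alpha> where \<alpha>: "x = (\<Sum>i<length vs. \<alpha> i *\<^sub>R vs ! i)"
      using span_set_obtain_sum_nth[OF assms(1)] x assms(3) by blast
    obtain \<beta> where \<beta>: "g = (\<Sum>j<length ys. \<beta> j *\<^sub>R ys ! j)"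
      using span_set_obtain_sum_nth[OF assms(2)] g assms(4)[OF x] by blast
    have "tensor_tuple (length vs) (length ys) \<alpha> \<beta> \<in> tuple.span (tensor_generators vs ys E G)"
      unfolding tensor_generators_def using x g \<alpha> \<beta> by (intro tuple.span_base) auto
    then have "tuple_pairing (length vs) (length ys) (pairing_matrix vs ys S)
        (tensor_tuple (length vs) (length ys) \<alpha> \<beta>) = 0"
      using pairing_0 by blast
    then show "g (S x) = 0" unfolding \<alpha> \<beta> tuple_pairing_tensor_tuple .
  qed
qed

lemma blinfun_eq_0_if_pairing_matrix_eq_0:
  fixes vs :: "'a::real_normed_vector list" and ys :: "('b::real_normed_vector \<Rightarrow>\<^sub>L real) list"
  assumes Y: "fin_dim_space TYPE('b)"
    and vs: "distinct vs" "span (set vs) = UNIV" and ys: "distinct ys" "span (set ys) = UNIV"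
    and zero: "\<And>i j. i < length vs \<Longrightarrow> j < length ys \<Longrightarrow> pairing_matrix vs ys S i j = 0"
  shows "S = 0"
proof -
  obtain BY :: "'b set" where "finite_basis BY" using finite_basis_exists[OF Y] by blast
  then interpret Y: finite_basis BY .
  have S_vs: "S (vs ! i) = 0" if "i < length vs" for i
  proof (rule ccontr)
    assume "S (vs ! i) \<noteq> 0"
    then obtain g :: "'b \<Rightarrow>\<^sub>L real" where g: "g (S (vs ! i)) \<noteq> 0"
      using Y.exists_functional_nonzero by blast
    obtain \<beta> where "g = (\<Sum>j<length ys. \<beta> j *\<^sub>R ys ! j)"
      using span_set_obtain_sum_nth[OF ys(1)] ys(2) by blast
    with zero[OF that] g show False
      by (simp add: pairing_matrix_def blinfun.sum_left blinfun.scaleR_left)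
  qed
  have "S x = 0" for x
  proof -
    obtain \<alpha> where "x = (\<Sum>i<length vs. \<alpha> i *\<^sub>R vs ! i)"
      using span_set_obtain_sum_nth[OF vs(1)] vs(2) by blast
    then show ?thesis using S_vs by (simp add: blinfun.sum_right blinfun.scaleR_right)
  qed
  then show ?thesis by (intro blinfun_eqI) simp
qed

lemma exists_blinfun_pairing_matrix:
  fixes vs :: "'a::real_normed_vector list" and ys :: "('b::real_normed_vector \<Rightarrow>\<^sub>L real) list"
    and c :: "nat \<Rightarrow> nat \<Rightarrow> real"
  assumes Y: "fin_dim_space TYPE('b)"
    and vs: "distinct vs" "independent (set vs)" "span (set vs) = UNIV"
    and ys: "distinct ys" "span (set ys) = UNIV" "length ys = dim (UNIV :: 'b set)"
  obtains S where "\<And>i j. i < length vs \<Longrightarrow> j < length ys \<Longrightarrow> pairing_matrix vs ys S i j = c i j"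
proof -
  interpret X: finite_basis "set vs" by unfold_locales (use vs in simp_all)
  obtain BY :: "'b set" where "finite_basis BY" using finite_basis_exists[OF Y] by blast
  then interpret Y: finite_basis BY .
  define w where "w j = (SOME y. \<forall>l<length ys. (ys ! l) y = (if l = j then 1 else 0))" for j
  have w: "(ys ! l) (w j) = (if l = j then 1 else 0)" if j: "j < length ys" and l: "l < length ys" for j l
  proof -
    have "\<exists>y. \<forall>l<length ys. (ys ! l) y = (if l = j then 1 else 0)"
      using Y.exists_dual_vector[OF ys j] by blast
    from someI_ex[OF this] l show ?thesis unfolding w_def by blast
  qed
  have coord_vs: "X.coord (vs ! i') (vs ! i) = (if i = i' then 1 else 0)"
    if "i < length vs" "i' < length vs" for i i'
    using real_vector.representation_basis[OF vs(2), of "vs ! i'"] that vs(1)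
    by (auto simp: nth_eq_iff_index_eq)
  define S where "S = (\<Sum>i<length vs. \<Sum>j<length ys.
    c i j *\<^sub>R (blinfun_scaleR_left (w j) o\<^sub>L X.coord_functional (vs ! i)))"
  have "pairing_matrix vs ys S i' l = c i' l" if "i' < length vs" "l < length ys" for i' l
  proof -
    have "pairing_matrix vs ys S i' l
        = (\<Sum>i<length vs. \<Sum>j<length ys. c i j * X.coord (vs ! i') (vs ! i) * (ys ! l) (w j))"
      by (simp add: S_def pairing_matrix_def blinfun.sum_left blinfun.sum_right
          blinfun.scaleR_left blinfun.scaleR_right mult.assoc)
    also have "\<dots> = (\<Sum>i<length vs. if i = i' then c i l else 0)"
    proof (intro sum.cong refl)
      fix i assume "i \<in> {..<length vs}"
      have "(\<Sum>j<length ys. c i j * X.coord (vs ! i') (vs ! i) * (ys ! l) (w j))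
          = (\<Sum>j<length ys. if j = l then c i j * X.coord (vs ! i') (vs ! i) else 0)"
        using that(2) by (intro sum.cong refl) (simp add: w)
      also have "\<dots> = (if i = i' then c i l else 0)"
        using that \<open>i \<in> {..<length vs}\<close> by (simp add: coord_vs)
      finally show "(\<Sum>j<length ys. c i j * X.coord (vs ! i') (vs ! i) * (ys ! l) (w j))
          = (if i = i' then c i l else 0)" .
    qed
    also have "\<dots> = c i' l" using that(1) by simp
    finally show ?thesis .
  qed
  then show ?thesis by (rule that)
qed

lemma eq_if_mult_le_mult:
  fixes k m p n :: nat
  assumes "k \<le> m" "p \<le> n" "m * n \<le> k * p" "0 < m" "0 < n"
  shows "k = m \<and> p = n"
proof (rule ccontr)
  assume "\<not> (k = m \<and> p = n)"
  with assms(1,2) have "k < m \<or> p < n" by auto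
  then have "k * p < m * n"
  proof
    assume "k < m"
    then have "k * p \<le> k * n" "k * n < m * n" using assms by simp_all
    then show ?thesis by linarith
  next
    assume "p < n"
    then have "k * p \<le> m * p" "m * p < m * n" using assms by simp_all
    then show ?thesis by linarith
  qed
  with assms(3) show False by simp
qed

lemma annihilates_only_0_if_dim_eq:
  fixes vs :: "'a::real_normed_vector list" and ys :: "('b::real_normed_vector \<Rightarrow>\<^sub>L real) list"
  assumes X: "fin_dim_space TYPE('a)" and Y: "fin_dim_space TYPE('b)"
    and vs: "distinct vs" "independent (set vs)" and ys: "distinct ys" "independent (set ys)"
    and E: "E \<subseteq> span (set vs)" and G: "\<And>x. x \<in> E \<Longrightarrow> G x \<subseteq> span (set ys)"
    and nontrivial: "(UNIV :: 'a set) \<noteq> {0}" "(UNIV :: 'b set) \<noteq> {0}"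
    and dim: "tuple.dim (tuple.span (tensor_generators vs ys E G)) = dim (UNIV :: 'a set) * dim (UNIV :: 'b set)"
    and S: "annihilates E G S"
  shows "S = 0"
proof -
  obtain BX :: "'a set" where "finite_basis BX" using finite_basis_exists[OF X] by blast
  then interpret X: finite_basis BX .
  obtain BY :: "'b set" where "finite_basis BY" using finite_basis_exists[OF Y] by blast
  then interpret Y: finite_basis BY .
  obtain BD :: "('b \<Rightarrow>\<^sub>L real) set" where "finite_basis BD"
    using finite_basis_exists[OF Y.fin_dim_dual] by blast
  then interpret D: finite_basis BD .
  define Z where "Z = tuple.span (tensor_generators vs ys E G)"
  have "length vs \<le> dim (UNIV :: 'a set)" by (rule X.length_le_dim[OF vs])
  moreover have "length ys \<le> dim (UNIV :: 'b set)"
    using D.length_le_dim[OF ys] Y.dim_dual_le by linarith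
  moreover have "dim (UNIV :: 'a set) > 0" "dim (UNIV :: 'b set) > 0"
    using nontrivial X.fdvs.dim_eq_0[of UNIV] Y.fdvs.dim_eq_0[of UNIV] by auto
  moreover have "tuple.dim Z \<le> length vs * length ys"
    unfolding Z_def by (rule dim_le_if_subset_tuple_space[OF span_tensor_generators_subset])
  ultimately have "length vs = dim (UNIV :: 'a set) \<and> length ys = dim (UNIV :: 'b set)"
    using dim unfolding Z_def by (intro eq_if_mult_le_mult) simp_all
  then have k: "length vs = dim (UNIV :: 'a set)" and p: "length ys = dim (UNIV :: 'b set)"
    by simp_all
  have Z_eq: "Z = tuple_space (length vs) (length ys)"
  proof (rule ccontr)
    assume "Z \<noteq> tuple_space (length vs) (length ys)"
    then have "tuple.dim Z < length vs * length ys"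
      unfolding Z_def
      by (intro dim_less_if_proper_subspace_of_tuple_space tuple.subspace_span span_tensor_generators_subset)
    with dim k p show False unfolding Z_def by simp
  qed
  have "pairing_matrix vs ys S i j = 0" if "i < length vs" "j < length ys" for i j
  proof -
    have "unit_tuple i j \<in> Z"
      unfolding Z_eq span_unit_tuples[symmetric] unit_tuples_def
      using that by (intro tuple.span_base) auto
    then have "tuple_pairing (length vs) (length ys) (pairing_matrix vs ys S) (unit_tuple i j) = 0"
      using S annihilates_iff_tuple_pairing_eq_0[of vs ys E G S, OF vs(1) ys(1) E G] unfolding Z_def by blast
    then show ?thesis using tuple_pairing_unit_tuple[OF that] by simp
  qed
  moreover have "span (set vs) = UNIV"
    using X.span_eq_UNIV_if_dim_le_length[OF vs] k by simp
  moreover have "span (set ys) = UNIV"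
    using D.span_eq_UNIV_if_dim_le_length[OF ys] Y.dim_dual_le p by simp
  ultimately show "S = 0"
    using blinfun_eq_0_if_pairing_matrix_eq_0[OF Y vs(1) _ ys(1)] by blast
qed

lemma span_eq_UNIV_if_annihilates_only_0:
  fixes V :: "'a::real_normed_vector set" and G :: "'a \<Rightarrow> ('b::real_normed_vector \<Rightarrow>\<^sub>L real) set"
  assumes X: "fin_dim_space TYPE('a)" and V: "independent V" and E: "E \<subseteq> span V"
    and only_0: "\<And>S::'a \<Rightarrow>\<^sub>L 'b. annihilates E G S \<Longrightarrow> S = 0"
    and nontrivial: "(UNIV :: 'b set) \<noteq> {0}"
  shows "span V = UNIV"
proof (rule ccontr)
  assume "span V \<noteq> UNIV"
  then obtain a where "a \<notin> span V" by auto
  obtain BX :: "'a set" where "finite_basis BX" using finite_basis_exists[OF X] by blast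
  then interpret X: finite_basis BX .
  obtain f :: "'a \<Rightarrow>\<^sub>L real" where f: "f a = 1" "\<And>x. x \<in> span V \<Longrightarrow> f x = 0"
    using X.exists_functional_vanishing_on_span[OF V \<open>a \<notin> span V\<close>] by blast
  obtain y :: 'b where "y \<noteq> 0" using nontrivial by auto
  define S where "S = blinfun_scaleR_left y o\<^sub>L f"
  have "f x = 0" if "x \<in> E" for x using E f(2) that by blast
  then have "annihilates E G S" unfolding annihilates_def S_def by simp
  then have "S = 0" by (rule only_0)
  then have "S a = 0" by simp
  with f(1) \<open>y \<noteq> 0\<close> show False unfolding S_def by simp
qed

lemma dim_le_length_if_annihilates_only_0:
  fixes ys :: "('b::real_normed_vector \<Rightarrow>\<^sub>L real) list" and E :: "'a::real_normed_vector set"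
  assumes X: "fin_dim_space TYPE('a)" and Y: "fin_dim_space TYPE('b)"
    and G: "\<And>x. x \<in> E \<Longrightarrow> G x \<subseteq> span (set ys)"
    and only_0: "\<And>S::'a \<Rightarrow>\<^sub>L 'b. annihilates E G S \<Longrightarrow> S = 0"
    and nontrivial: "(UNIV :: 'a set) \<noteq> {0}"
  shows "dim (UNIV :: 'b set) \<le> length ys"
proof (rule ccontr)
  assume "\<not> dim (UNIV :: 'b set) \<le> length ys"
  obtain BX :: "'a set" where "finite_basis BX" using finite_basis_exists[OF X] by blast
  then interpret X: finite_basis BX .
  obtain BY :: "'b set" where "finite_basis BY" using finite_basis_exists[OF Y] by blast
  then interpret Y: finite_basis BY .
  obtain y where "y \<noteq> 0" and y: "\<And>j. j < length ys \<Longrightarrow> (ys ! j) y = 0"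
    using Y.exists_common_zero \<open>\<not> dim (UNIV :: 'b set) \<le> length ys\<close> by (metis not_le)
  have span_ys: "g y = 0" if "g \<in> span (set ys)" for g
  proof (rule real_vector.linear_eq_0_on_span[OF _ _ that])
    show "linear (\<lambda>g::'b \<Rightarrow>\<^sub>L real. g y)"
      by (rule bounded_linear.linear[OF bounded_bilinear.bounded_linear_left[OF bounded_bilinear_blinfun_apply]])
    show "g y = 0" if "g \<in> set ys" for g using y that by (metis in_set_conv_nth)
  qed
  obtain v :: 'a where "v \<noteq> 0" using nontrivial by auto
  then obtain f :: "'a \<Rightarrow>\<^sub>L real" where "f v \<noteq> 0" using X.exists_functional_nonzero by blast
  define S where "S = blinfun_scaleR_left y o\<^sub>L f"
  have "g y = 0" if "x \<in> E" "g \<in> G x" for x g using G span_ys that by blast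
  then have "annihilates E G S" unfolding annihilates_def S_def by (simp add: blinfun.scaleR_right)
  then have "S = 0" by (rule only_0)
  then have "S v = 0" by simp
  with \<open>f v \<noteq> 0\<close> \<open>y \<noteq> 0\<close> show False unfolding S_def by simp
qed

lemma dim_eq_if_annihilates_only_0:
  fixes vs :: "'a::real_normed_vector list" and ys :: "('b::real_normed_vector \<Rightarrow>\<^sub>L real) list"
  assumes X: "fin_dim_space TYPE('a)" and Y: "fin_dim_space TYPE('b)"
    and vs: "distinct vs" "independent (set vs)" and ys: "distinct ys" "independent (set ys)"
    and E: "E \<subseteq> span (set vs)" and G: "\<And>x. x \<in> E \<Longrightarrow> G x \<subseteq> span (set ys)"
    and nontrivial: "(UNIV :: 'a set) \<noteq> {0}" "(UNIV :: 'b set) \<noteq> {0}"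
    and only_0: "\<And>S::'a \<Rightarrow>\<^sub>L 'b. annihilates E G S \<Longrightarrow> S = 0"
  shows "tuple.dim (tuple.span (tensor_generators vs ys E G)) = dim (UNIV :: 'a set) * dim (UNIV :: 'b set)"
proof -
  obtain BY :: "'b set" where "finite_basis BY" using finite_basis_exists[OF Y] by blast
  then interpret Y: finite_basis BY .
  obtain BD :: "('b \<Rightarrow>\<^sub>L real) set" where "finite_basis BD"
    using finite_basis_exists[OF Y.fin_dim_dual] by blast
  then interpret D: finite_basis BD .
  define Z where "Z = tuple.span (tensor_generators vs ys E G)"
  have span_vs: "span (set vs) = UNIV"
    using span_eq_UNIV_if_annihilates_only_0[of "set vs" E G, OF X vs(2) E only_0 nontrivial(2)] .
  then have k: "length vs = dim (UNIV :: 'a set)"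
    using real_vector.dim_span_eq_card_independent[OF vs(2)] distinct_card[OF vs(1)] by simp
  have "dim (UNIV :: 'b set) \<le> length ys"
    using dim_le_length_if_annihilates_only_0[of E G ys, OF X Y G only_0 nontrivial(1)] .
  then have p: "length ys = dim (UNIV :: 'b set)"
    using D.length_le_dim[OF ys] Y.dim_dual_le by linarith
  have span_ys: "span (set ys) = UNIV"
    using D.span_eq_UNIV_if_dim_le_length[OF ys] Y.dim_dual_le p by simp
  have "Z = tuple_space (length vs) (length ys)"
  proof (rule ccontr)
    assume "Z \<noteq> tuple_space (length vs) (length ys)"
    moreover have "tuple.subspace Z" unfolding Z_def by (rule tuple.subspace_span)
    moreover have "Z \<subseteq> tuple_space (length vs) (length ys)"
      unfolding Z_def by (rule span_tensor_generators_subset)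
    ultimately obtain c i0 j0 where c: "i0 < length vs" "j0 < length ys" "c i0 j0 \<noteq> 0"
      and c_Z: "\<And>f. f \<in> Z \<Longrightarrow> tuple_pairing (length vs) (length ys) c f = 0"
      using proper_subspace_of_tuple_space_annihilated by metis
    obtain S where S: "\<And>i j. i < length vs \<Longrightarrow> j < length ys \<Longrightarrow> pairing_matrix vs ys S i j = c i j"
      using exists_blinfun_pairing_matrix[OF Y vs span_vs ys(1) span_ys p] by blast
    then have "tuple_pairing (length vs) (length ys) (pairing_matrix vs ys S) f
        = tuple_pairing (length vs) (length ys) c f" for f
      unfolding tuple_pairing_def by (intro sum.cong refl) auto
    then have "annihilates E G S"
      using annihilates_iff_tuple_pairing_eq_0[of vs ys E G S, OF vs(1) ys(1) E G] c_Z
      unfolding Z_def by simp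
    then have "S = 0" by (rule only_0)
    with S[OF c(1,2)] c(3) show False by (simp add: pairing_matrix_def)
  qed
  then show ?thesis using dim_tuple_space k p unfolding Z_def by simp
qed

lemma dim_span_tensor_generators_eq_iff:
  fixes vs :: "'a::real_normed_vector list" and ys :: "('b::real_normed_vector \<Rightarrow>\<^sub>L real) list"
  assumes "fin_dim_space TYPE('a)" "fin_dim_space TYPE('b)"
    and "distinct vs" "independent (set vs)" "distinct ys" "independent (set ys)"
    and "E \<subseteq> span (set vs)" "\<And>x. x \<in> E \<Longrightarrow> G x \<subseteq> span (set ys)"
    and "(UNIV :: 'a set) \<noteq> {0}" "(UNIV :: 'b set) \<noteq> {0}"
  shows "tuple.dim (tuple.span (tensor_generators vs ys E G)) = dim (UNIV :: 'a set) * dim (UNIV :: 'b set)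
    \<longleftrightarrow> (\<forall>S::'a \<Rightarrow>\<^sub>L 'b. annihilates E G S \<longrightarrow> S = 0)"
  using annihilates_only_0_if_dim_eq[where G = G, OF assms]
    dim_eq_if_annihilates_only_0[where G = G, OF assms] by blast

context finite_basis
begin

lemma exists_basis_list: "\<exists>vs. is_basis_list vs (span (A :: 'a set))"
proof -
  obtain C where C: "C \<subseteq> span A" "independent C" "span A \<subseteq> span C"
    by (rule real_vector.basis_exists[of "span A"])
  have "finite C" using real_vector.independent_span_bound[OF finite_B C(2)] span_B by auto
  then obtain vs where vs: "set vs = C" "distinct vs" using finite_distinct_list by blast
  have "span C \<subseteq> span A" using C(1) by (metis real_vector.span_mono real_vector.span_span)
  with C vs have "is_basis_list vs (span A)" unfolding is_basis_list_def by blast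
  then show ?thesis ..
qed

end

lemma smooth_index_eq_mult_dim_iff:
  fixes T :: "'a::real_normed_vector \<Rightarrow>\<^sub>L 'b::real_normed_vector" and R :: "'a set"
  assumes X: "fin_dim_space TYPE('a)" and Y: "fin_dim_space TYPE('b)"
    and nontrivial: "(UNIV :: 'a set) \<noteq> {0}" "(UNIV :: 'b set) \<noteq> {0}"
  shows "smooth_index R T = dim (UNIV :: 'a set) * dim (UNIV :: 'b set) \<longleftrightarrow>
    (\<forall>S. annihilates (R \<inter> ext_ball) (extreme_supports T) S \<longrightarrow> S = 0)"
proof -
  obtain BX :: "'a set" where "finite_basis BX" using finite_basis_exists[OF X] by blast
  then interpret X: finite_basis BX .
  obtain BY :: "'b set" where "finite_basis BY" using finite_basis_exists[OF Y] by blast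
  then interpret Y: finite_basis BY .
  obtain BD :: "('b \<Rightarrow>\<^sub>L real) set" where "finite_basis BD"
    using finite_basis_exists[OF Y.fin_dim_dual] by blast
  then interpret D: finite_basis BD .
  define vs where "vs = (SOME vs. is_basis_list vs (span R))"
  define ys where "ys = (SOME ys. is_basis_list ys (W_space R T))"
  have vs: "distinct vs" "independent (set vs)" "span (set vs) = span R"
    using someI_ex[OF X.exists_basis_list[of R]] unfolding vs_def is_basis_list_def by auto
  have ys: "distinct ys" "independent (set ys)" "span (set ys) = W_space R T"
    using someI_ex[OF D.exists_basis_list[of "\<Union>v \<in> R \<inter> ext_ball. supp_fun (T v)"]]
    unfolding ys_def is_basis_list_def W_space_def by auto
  have E: "R \<inter> ext_ball \<subseteq> span (set vs)"
    unfolding vs(3) using real_vector.span_superset by blast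
  have G: "extreme_supports T x \<subseteq> span (set ys)" if "x \<in> R \<inter> ext_ball" for x
  proof
    fix g assume "g \<in> extreme_supports T x"
    then have "g \<in> supp_fun (T x)" unfolding extreme_supports_def extreme_point_of_def by simp
    then show "g \<in> span (set ys)"
      unfolding ys(3) W_space_def by (intro real_vector.span_base UN_I[OF that])
  qed
  have "smooth_index R T
      = tuple.dim (tuple.span (tensor_generators vs ys (R \<inter> ext_ball) (extreme_supports T)))"
    unfolding smooth_index_def Let_def vs_def[symmetric] ys_def[symmetric]
      Z_space_eq_span_tensor_generators ..
  then show ?thesis
    using dim_span_tensor_generators_eq_iff[where G = "extreme_supports T",
        OF X Y vs(1,2) ys(1,2) E G nontrivial] by simp
qed

theorem mainTheorem8:
  fixes T :: "'a::real_normed_vector \<Rightarrow>\<^sub>L 'b::real_normed_vector"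
    and m n :: nat
  assumes "fin_dim_space TYPE('a)" and "fin_dim_space TYPE('b)"
    and "polyhedral TYPE('a)" and "polyhedral TYPE('b)"
    and "dim (UNIV :: 'a set) = m" and "dim (UNIV :: 'b set) = n"
    and "norm T = 1"
  shows "extreme_contraction T \<longleftrightarrow> smooth_index (norm_attain T) T = m * n"
proof -
  obtain v where "v \<noteq> 0" "T v \<noteq> 0"
    by (rule obtain_nonzero_image_if_norm_eq_1[OF \<open>norm T = 1\<close>])
  then have "(UNIV :: 'a set) \<noteq> {0}" "(UNIV :: 'b set) \<noteq> {0}"
    by (metis UNIV_I singletonD)+
  then show ?thesis
    using extreme_contraction_iff_annihilates_only_0[OF assms(1,3,2,4,7)]
      smooth_index_eq_mult_dim_iff[OF assms(1,2)] assms(5,6) by simp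
qed

end
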